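(* Let $\mathcal{A}$ be a finite list in a finitely generated abelian group $\Gamma$, and let $G_1,G_2$ be torsion-wise finite abelian groups. Then $$T^{G_1\times G_2}_{\mathcal{A}}(x,y)=\sum_{\mathcal{B}\subset\mathcal{A}}T^{G_1}_{\mathcal{B}}(0,y)\cdot T^{G_2}_{\mathcal{A}/\mathcal{B}}(x,0),$$ where $\mathcal{B}$ is regarded as a list in $\Gamma$ and $\mathcal{A}/\mathcal{B}$ as a list in $\Gamma/\langle\mathcal{B}\rangle$.
   Context: $G$ is torsion-wise finite if $G[d]=\{x\in G\mid dx=0\}$ is finite for all $d>0$. Sublists are distinguished by index. For a list $\mathcal{L}$ in a finitely generated abelian group $\Lambda$ and a sublist $\mathcal{S}$: $r_{\mathcal{S}}$ is the rank of $\langle\mathcal{S}\rangle$, $m(\mathcal{S};G)=\#\mathrm{Hom}((\Lambda/\langle\mathcal{S}\rangle)_{\mathrm{tor}},G)$, and $T^G_{\mathcal{L}}(x,y)=\sum_{\mathcal{S}\subset\mathcal{L}}m(\mathcal{S};G)(x-1)^{r_{\mathcal{L}}-r_{\mathcal{S}}}(y-1)^{\#\mathcal{S}-r_{\mathcal{S}}}$. The contraction $\mathcal{A}/\mathcal{B}$ is the list of cosets $\{\overline\alpha\mid\alpha\in\mathcal{A}\smallsetminus\mathcal{B}\}$ in $\Gamma/\langle\mathcal{B}\rangle$. *)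

theory Defs
  imports "HOL-Algebra.Algebra"
begin

definition fin_gen :: "('a, 'b) monoid_scheme \<Rightarrow> bool" where
  "fin_gen Lam \<longleftrightarrow> (\<exists>S. finite S \<and> S \<subseteq> carrier Lam \<and> generate Lam S = carrier Lam)"

definition torsion_wise_finite :: "('a, 'b) monoid_scheme \<Rightarrow> bool" where
  "torsion_wise_finite G \<longleftrightarrow>
     (\<forall>d::nat. d > 0 \<longrightarrow> finite {x \<in> carrier G. x [^]\<^bsub>G\<^esub> d = \<one>\<^bsub>G\<^esub>})"

definition z_indep :: "('a, 'b) monoid_scheme \<Rightarrow> 'a set \<Rightarrow> bool" where
  "z_indep Lam S \<longleftrightarrow> finite S \<and> S \<subseteq> carrier Lam \<and>
     (\<forall>n :: 'a \<Rightarrow> int. finprod Lam (\<lambda>s. s [^]\<^bsub>Lam\<^esub> n s) S = \<one>\<^bsub>Lam\<^esub> \<longrightarrow> (\<forall>s\<in>S. n s = 0))"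

definition grank :: "('a, 'b) monoid_scheme \<Rightarrow> 'a set \<Rightarrow> nat" where
  "grank Lam H = Sup {card S | S. S \<subseteq> H \<and> z_indep Lam S}"

definition tors :: "('a, 'b) monoid_scheme \<Rightarrow> ('a, 'b) monoid_scheme" where
  "tors Q = Q\<lparr>carrier := {x \<in> carrier Q. \<exists>n::nat. n > 0 \<and> x [^]\<^bsub>Q\<^esub> n = \<one>\<^bsub>Q\<^esub>}\<rparr>"

definition num_hom :: "('a, 'b) monoid_scheme \<Rightarrow> ('c, 'd) monoid_scheme \<Rightarrow> nat" where
  "num_hom T G = card (hom T G \<inter> extensional (carrier T))"

definition sub_elems :: "'a list \<Rightarrow> nat set \<Rightarrow> 'a set" where
  "sub_elems L I = (\<lambda>i. L ! i) ` I"

definition mult_m :: "('a, 'b) monoid_scheme \<Rightarrow> 'a set \<Rightarrow> ('c, 'd) monoid_scheme \<Rightarrow> nat" where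
  "mult_m Lam S GG = num_hom (tors (FactGroup Lam (generate Lam S))) GG"

(* T^G_L(x,y), sublists distinguished by index sets I *)
definition tutteG :: "('a, 'b) monoid_scheme \<Rightarrow> 'a list \<Rightarrow> ('c, 'd) monoid_scheme
    \<Rightarrow> 'e::comm_ring_1 \<Rightarrow> 'e \<Rightarrow> 'e" where
  "tutteG Lam L G x y =
     (\<Sum>I\<in>Pow {..<length L}.
        of_nat (mult_m Lam (sub_elems L I) G)
        * (x - 1) ^ (grank Lam (generate Lam (set L)) - grank Lam (generate Lam (sub_elems L I)))
        * (y - 1) ^ (card I - grank Lam (generate Lam (sub_elems L I))))"

definition sublist_idx :: "'a list \<Rightarrow> nat set \<Rightarrow> 'a list" where
  "sublist_idx A I = map (\<lambda>i. A ! i) (filter (\<lambda>i. i \<in> I) [0..<length A])"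

(* contraction A/B: cosets of the entries of A not in B, in \<Gamma>/<B> *)
definition contr :: "('a, 'b) monoid_scheme \<Rightarrow> 'a list \<Rightarrow> nat set \<Rightarrow> 'a set list" where
  "contr \<Gamma> A I = map (\<lambda>i. generate \<Gamma> (sub_elems A I) #>\<^bsub>\<Gamma>\<^esub> (A ! i))
                     (filter (\<lambda>i. i \<notin> I) [0..<length A])"

end

theory Submission
  imports Defs
begin

text \<open>Write r_S for the rank of the subgroup generated by the entries of A indexed by S, and
  m_i(S) for m(S; G_i). Homomorphisms into G_1 \<times> G_2 are pairs of homomorphisms, so the
  left-hand side is the sum over S of m_1(S) m_2(S) (x - 1)^(r_N - r_S) (y - 1)^(|S| - r_S).
  In the contraction by A_I, the entries A_T span a subgroup of rank r_(I \<union> T) - r_I, since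
  rank is additive along \<langle>A_I\<rangle> \<subseteq> \<langle>A_(I \<union> T)\<rangle>, and
  (\<Gamma>/\<langle>A_I\<rangle>)/\<langle>A_T\<rangle> \<cong> \<Gamma>/\<langle>A_(I \<union> T)\<rangle> gives the
  multiplicity m_2(I \<union> T). Expanding both Tutte polynomials on the right therefore turns the sum
  over I into a sum over chains S \<subseteq> I \<subseteq> S', and the alternating sum over the intermediate
  I vanishes unless S = S'.\<close>

section \<open>Independence modulo a subgroup\<close>

definition lincomb :: "('a, 'b) monoid_scheme \<Rightarrow> 'i set \<Rightarrow> ('i \<Rightarrow> 'a) \<Rightarrow> ('i \<Rightarrow> int) \<Rightarrow> 'a" where
  "lincomb G I f n = finprod G (\<lambda>i. f i [^]\<^bsub>G\<^esub> n i) I"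

definition indep_mod :: "('a, 'b) monoid_scheme \<Rightarrow> 'a set \<Rightarrow> 'i set \<Rightarrow> ('i \<Rightarrow> 'a) \<Rightarrow> bool" where
  "indep_mod G K I f \<longleftrightarrow> finite I \<and> f \<in> I \<rightarrow> carrier G \<and>
     (\<forall>n. lincomb G I f n \<in> K \<longrightarrow> (\<forall>i\<in>I. n i = 0))"

(* The rank of the image of H in G/K (grank_FactGroup_image), computed without leaving G. *)
definition rank_mod :: "('a, 'b) monoid_scheme \<Rightarrow> 'a set \<Rightarrow> 'a set \<Rightarrow> nat" where
  "rank_mod G K H = Sup {card S | S. S \<subseteq> H \<and> indep_mod G K S id}"

context comm_group
begin

lemma lincomb_closed [simp]: "f \<in> I \<rightarrow> carrier G \<Longrightarrow> lincomb G I f n \<in> carrier G"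
  unfolding lincomb_def by (auto intro!: finprod_closed)

lemma lincomb_add:
  assumes "f \<in> I \<rightarrow> carrier G"
  shows "lincomb G I f (\<lambda>i. n i + m i) = lincomb G I f n \<otimes> lincomb G I f m"
proof -
  have "lincomb G I f (\<lambda>i. n i + m i) = finprod G (\<lambda>i. f i [^] n i \<otimes> f i [^] m i) I"
    unfolding lincomb_def using assms by (intro finprod_cong') (auto simp: int_pow_mult Pi_iff)
  also have "\<dots> = lincomb G I f n \<otimes> lincomb G I f m"
    unfolding lincomb_def using assms by (subst finprod_multf) (auto simp: Pi_iff)
  finally show ?thesis .
qed

lemma finprod_int_pow:
  "f \<in> I \<rightarrow> carrier G \<Longrightarrow> finprod G (\<lambda>i. f i [^] (c::int)) I = finprod G f I [^] c"
proof (induct I rule: infinite_finite_induct)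
  case (insert a A)
  then have "(\<Otimes>i\<in>insert a A. f i [^] c) = f a [^] c \<otimes> (\<Otimes>i\<in>A. f i [^] c)"
    by (intro finprod_insert) (auto simp: Pi_iff)
  then show ?case using insert by (simp add: int_pow_distrib Pi_iff)
qed auto

lemma lincomb_smult:
  "f \<in> I \<rightarrow> carrier G \<Longrightarrow> lincomb G I f (\<lambda>i. c * n i) = lincomb G I f n [^] c"
  unfolding lincomb_def
  by (subst finprod_int_pow[symmetric])
    (auto intro!: finprod_cong' simp: int_pow_pow mult.commute Pi_iff)

lemma lincomb_sum:
  assumes "f \<in> I \<rightarrow> carrier G" "finite S"
  shows "lincomb G I f (\<lambda>i. \<Sum>s\<in>S. d s * n s i) = finprod G (\<lambda>s. lincomb G I f (n s) [^] d s) S"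
  using assms(2)
proof (induct S rule: finite_induct)
  case empty
  then show ?case by (simp add: lincomb_def)
next
  case (insert a A)
  then show ?case using assms(1) by (simp add: lincomb_add lincomb_smult)
qed

lemma lincomb_zero_outside:
  assumes "finite I" "J \<subseteq> I" "\<And>i. i \<in> I - J \<Longrightarrow> n i = 0" "f \<in> I \<rightarrow> carrier G"
  shows "lincomb G I f n = lincomb G J f n"
  unfolding lincomb_def
  by (rule finprod_mono_neutral_cong_left[symmetric]) (use assms in \<open>auto simp: Pi_iff\<close>)

lemma lincomb_restrict:
  assumes "finite I" "J \<subseteq> I" "f \<in> I \<rightarrow> carrier G"
  shows "lincomb G I f (\<lambda>i. if i \<in> J then n i else 0) = lincomb G J f n"
proof -
  have "lincomb G I f (\<lambda>i. if i \<in> J then n i else 0) = lincomb G J f (\<lambda>i. if i \<in> J then n i else 0)"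
    using assms by (intro lincomb_zero_outside) auto
  also have "\<dots> = lincomb G J f n"
    unfolding lincomb_def using assms by (intro finprod_cong') (auto simp: Pi_iff)
  finally show ?thesis .
qed

lemma lincomb_single:
  "finite I \<Longrightarrow> i \<in> I \<Longrightarrow> f \<in> I \<rightarrow> carrier G \<Longrightarrow>
   lincomb G I f (\<lambda>j. if j = i then c else 0) = f i [^] c"
  unfolding lincomb_def
  by (subst finprod_singleton_swap[symmetric, of i I "\<lambda>j. f j [^] c"])
    (auto intro!: finprod_cong' simp: Pi_iff)

lemma lincomb_in_subgroup:
  assumes "subgroup H G" "f ` I \<subseteq> H"
  shows "lincomb G I f n \<in> H"
proof (cases "finite I")
  case True
  then show ?thesis using assms(2) unfolding lincomb_def
  proof (induct I rule: finite_induct)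
    case empty
    then show ?case using assms(1) by (simp add: subgroup.one_closed)
  next
    case (insert a A)
    have "f \<in> insert a A \<rightarrow> carrier G" using insert assms(1) subgroup.subset by fastforce
    then have "(\<Otimes>i\<in>insert a A. f i [^] n i) = f a [^] n a \<otimes> (\<Otimes>i\<in>A. f i [^] n i)"
      using insert by (intro finprod_insert) (auto simp: Pi_iff)
    moreover have "f a [^] n a \<in> H" using insert assms(1) by (simp add: subgroup_int_pow_closed)
    ultimately show ?case using insert assms(1) by (simp add: subgroup.m_closed)
  qed
next
  case False
  then show ?thesis using assms(1) by (simp add: lincomb_def subgroup.one_closed)
qed

lemma indep_mod_notin:
  assumes "indep_mod G K I f" "i \<in> I" "subgroup K G"
  shows "f i \<notin> K"
proof
  have fI: "finite I" and fc: "f \<in> I \<rightarrow> carrier G"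
    and ind: "\<And>n. lincomb G I f n \<in> K \<Longrightarrow> \<forall>i\<in>I. n i = 0"
    using assms(1) unfolding indep_mod_def by blast+
  assume "f i \<in> K"
  moreover have "lincomb G I f (\<lambda>j. if j = i then 1 else 0) = f i"
    using lincomb_single[OF fI assms(2) fc, of 1] assms(2) fc by (simp add: Pi_iff)
  ultimately have "\<forall>j\<in>I. (if j = i then 1::int else 0) = 0"
    using ind[of "\<lambda>j. if j = i then 1 else 0"] by simp
  then show False using assms(2) by (auto dest: bspec[where x = i])
qed

lemma indep_mod_inj_on:
  assumes "indep_mod G K I f" "subgroup K G"
  shows "inj_on f I"
proof (rule inj_onI, rule ccontr)
  have fI: "finite I" and fc: "f \<in> I \<rightarrow> carrier G"
    and ind: "\<And>n. lincomb G I f n \<in> K \<Longrightarrow> \<forall>i\<in>I. n i = 0"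
    using assms(1) unfolding indep_mod_def by blast+
  fix a b assume a: "a \<in> I" and b: "b \<in> I" and e: "f a = f b" and ab: "a \<noteq> b"
  define n where "n = (\<lambda>j. (if j = a then 1 else 0) + (if j = b then -1 else (0::int)))"
  have "lincomb G I f n = f a \<otimes> inv (f b)"
    unfolding n_def using lincomb_single[OF fI a fc, of 1] lincomb_single[OF fI b fc, of "-1"] fc a b
    by (simp add: lincomb_add int_pow_neg Pi_iff)
  also have "\<dots> = \<one>" using e fc b by (simp add: Pi_iff)
  finally have "n a = 0"
    using ind[of n] a subgroup.one_closed[OF assms(2)] by simp
  then show False using ab by (simp add: n_def)
qed

lemma indep_mod_cong:
  assumes "\<And>i. i \<in> I \<Longrightarrow> f i = g i"
  shows "indep_mod G K I f = indep_mod G K I g"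
proof -
  have "lincomb G I f n = lincomb G I g n" if "g \<in> I \<rightarrow> carrier G" for n
    unfolding lincomb_def using assms that by (intro finprod_cong') (auto simp: Pi_iff)
  moreover have "f \<in> I \<rightarrow> carrier G \<longleftrightarrow> g \<in> I \<rightarrow> carrier G" using assms by (auto simp: Pi_iff)
  ultimately show ?thesis unfolding indep_mod_def by (cases "g \<in> I \<rightarrow> carrier G") simp_all
qed

lemma indep_mod_image:
  assumes "indep_mod G K I f" "subgroup K G"
  shows "indep_mod G K (f ` I) id"
  unfolding indep_mod_def
proof (intro conjI allI impI ballI)
  have fI: "finite I" and fc: "f \<in> I \<rightarrow> carrier G"
    and ind: "\<And>n. lincomb G I f n \<in> K \<Longrightarrow> \<forall>i\<in>I. n i = 0"
    using assms(1) unfolding indep_mod_def by blast+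
  show "finite (f ` I)" using fI by simp
  show "id \<in> f ` I \<rightarrow> carrier G" using fc by auto
  fix n y assume h: "lincomb G (f ` I) id n \<in> K" and y: "y \<in> f ` I"
  have "lincomb G (f ` I) id n = lincomb G I f (\<lambda>i. n (f i))"
    unfolding lincomb_def using fc indep_mod_inj_on[OF assms]
    by (subst finprod_reindex) (auto simp: Pi_iff)
  with h ind have "\<forall>i\<in>I. n (f i) = 0" by simp
  with y show "n y = 0" by auto
qed

lemma generate_insert_subset:
  assumes "subgroup K G" "g \<in> carrier G"
  shows "generate G (insert g K) \<subseteq> {k \<otimes> g [^] (p::int) | k p. k \<in> K}"
proof (rule generate_subgroup_incl)
  interpret K: subgroup K G by fact
  show "insert g K \<subseteq> {k \<otimes> g [^] (p::int) | k p. k \<in> K}"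
  proof
    fix x assume "x \<in> insert g K"
    then show "x \<in> {k \<otimes> g [^] (p::int) | k p. k \<in> K}"
    proof
      assume "x = g"
      then show ?thesis using assms by (auto intro!: exI[of _ "\<one>"] exI[of _ "1::int"])
    next
      assume "x \<in> K"
      then show ?thesis using assms by (auto intro!: exI[of _ x] exI[of _ "0::int"])
    qed
  qed
  show "subgroup {k \<otimes> g [^] (p::int) | k p. k \<in> K} G"
  proof
    show "{k \<otimes> g [^] (p::int) | k p. k \<in> K} \<subseteq> carrier G" using assms by auto
    show "\<one> \<in> {k \<otimes> g [^] (p::int) | k p. k \<in> K}"
      using assms by (auto intro!: exI[of _ "\<one>"] exI[of _ "0::int"])
  next
    fix x y assume "x \<in> {k \<otimes> g [^] (p::int) | k p. k \<in> K}" "y \<in> {k \<otimes> g [^] (p::int) | k p. k \<in> K}"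
    then obtain k1 p1 k2 p2 where x: "x = k1 \<otimes> g [^] (p1::int)" "k1 \<in> K"
      and y: "y = k2 \<otimes> g [^] (p2::int)" "k2 \<in> K" by auto
    have "x \<otimes> y = (k1 \<otimes> k2) \<otimes> g [^] (p1 + p2)"
      using x y assms by (simp add: int_pow_mult m_ac)
    then show "x \<otimes> y \<in> {k \<otimes> g [^] (p::int) | k p. k \<in> K}" using x y by auto
    have "inv x = inv k1 \<otimes> g [^] (- p1)"
      using x assms by (simp add: int_pow_neg inv_mult_group m_comm)
    then show "inv x \<in> {k \<otimes> g [^] (p::int) | k p. k \<in> K}" using x by auto
  qed
qed

lemma pow_mult_pow_cancel:
  assumes "k1 \<in> carrier G" "k2 \<in> carrier G" "g \<in> carrier G"
  shows "(k1 \<otimes> g [^] (p1::int)) [^] (p2::int) \<otimes> (k2 \<otimes> g [^] p2) [^] (- p1) = k1 [^] p2 \<otimes> k2 [^] (- p1)"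
proof -
  have "(k1 \<otimes> g [^] p1) [^] p2 \<otimes> (k2 \<otimes> g [^] p2) [^] (- p1)
      = (k1 [^] p2 \<otimes> k2 [^] (- p1)) \<otimes> (g [^] (p1 * p2) \<otimes> g [^] (- (p1 * p2)))"
    using assms by (simp add: int_pow_distrib int_pow_pow mult.commute m_ac)
  also have "g [^] (p1 * p2) \<otimes> g [^] (- (p1 * p2)) = \<one>"
    using assms by (simp flip: int_pow_mult)
  finally show ?thesis using assms by simp
qed

lemma generate_insert_Un:
  assumes "Y \<subseteq> carrier G" "g \<in> carrier G" "subgroup K G"
  shows "generate G (insert g Y \<union> K) = generate G (Y \<union> generate G (insert g K))"
proof (rule equalityI)
  have Ks: "K \<subseteq> carrier G" using assms(3) subgroup.subset by blast
  have "insert g K \<subseteq> generate G (insert g K)" by (auto intro: generate.incl)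
  then show "generate G (insert g Y \<union> K) \<subseteq> generate G (Y \<union> generate G (insert g K))"
    by (intro mono_generate) blast
  have "generate G (insert g K) \<subseteq> generate G (insert g Y \<union> K)" by (rule mono_generate) blast
  moreover have "Y \<subseteq> generate G (insert g Y \<union> K)" by (auto intro: generate.incl)
  moreover have "subgroup (generate G (insert g Y \<union> K)) G"
    using assms(1,2) Ks by (intro generate_is_subgroup) blast
  ultimately show "generate G (Y \<union> generate G (insert g K)) \<subseteq> generate G (insert g Y \<union> K)"
    by (intro generate_subgroup_incl) blast+
qed

lemma obtain_maximal_indep_mod:
  assumes "finite I" "f \<in> I \<rightarrow> carrier G"
  obtains J where "J \<subseteq> I" "indep_mod G K J f" "\<And>i. i \<in> I - J \<Longrightarrow> \<not> indep_mod G K (insert i J) f"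
proof -
  define F where "F = {J. J \<subseteq> I \<and> indep_mod G K J f}"
  have "{} \<in> F" unfolding F_def indep_mod_def by auto
  moreover have "finite F" unfolding F_def using assms by auto
  ultimately have "Max (card ` F) \<in> card ` F" by (intro Max_in) auto
  then obtain J where J: "J \<in> F" "card J = Max (card ` F)" by auto
  have "\<not> indep_mod G K (insert i J) f" if i: "i \<in> I - J" for i
  proof
    assume "indep_mod G K (insert i J) f"
    then have "card (insert i J) \<le> card J" using J i \<open>finite F\<close> unfolding F_def by auto
    moreover have "finite J" using J assms(1) unfolding F_def by (auto intro: finite_subset)
    ultimately show False using i by simp
  qed
  then show ?thesis using that J unfolding F_def by blast
qed

lemma dependent_insert_relation:
  assumes fI: "finite I" and fc: "f \<in> I \<rightarrow> carrier G" and JI: "J \<subseteq> I" and i: "i \<in> I - J"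
    and Jind: "indep_mod G K J f" and dep: "\<not> indep_mod G K (insert i J) f"
  shows "\<exists>N. (\<forall>j. j \<notin> insert i J \<longrightarrow> N j = 0) \<and> N i \<noteq> 0 \<and> lincomb G I f N \<in> K"
proof -
  have finJ: "finite (insert i J)" and fc': "f \<in> insert i J \<rightarrow> carrier G"
    using fI JI fc i finite_subset by auto
  then obtain n where n: "lincomb G (insert i J) f n \<in> K" and nz: "\<exists>j\<in>insert i J. n j \<noteq> 0"
    using dep unfolding indep_mod_def by blast
  have "n i \<noteq> 0"
  proof
    assume "n i = 0"
    then have "lincomb G (insert i J) f n = lincomb G J f n"
      using finJ fc' by (intro lincomb_zero_outside) auto
    with n Jind have "\<forall>j\<in>J. n j = 0" unfolding indep_mod_def by auto
    with nz \<open>n i = 0\<close> show False by auto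
  qed
  moreover have "lincomb G I f (\<lambda>j. if j \<in> insert i J then n j else 0) = lincomb G (insert i J) f n"
    using fI JI i fc by (intro lincomb_restrict) auto
  ultimately show ?thesis using n by (intro exI[of _ "\<lambda>j. if j \<in> insert i J then n j else 0"]) auto
qed

text \<open>Adjoining one generator to K lowers independence by at most one: two elements outside a
  maximal independent set J would give two relations modulo the enlarged subgroup, and eliminating
  the new generator between them yields a relation modulo K.\<close>

lemma card_Diff_maximal_indep_mod_le_1:
  assumes K: "subgroup K G" and g: "g \<in> carrier G"
    and I: "indep_mod G K I f" and JI: "J \<subseteq> I"
    and Jind: "indep_mod G (generate G (insert g K)) J f"
    and maximal: "\<And>i. i \<in> I - J \<Longrightarrow> \<not> indep_mod G (generate G (insert g K)) (insert i J) f"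
  shows "card (I - J) \<le> 1"
proof -
  have Ks: "K \<subseteq> carrier G" using K subgroup.subset by blast
  have fI: "finite I" and fc: "f \<in> I \<rightarrow> carrier G"
    and ind: "\<And>n. lincomb G I f n \<in> K \<Longrightarrow> \<forall>i\<in>I. n i = 0"
    using I unfolding indep_mod_def by blast+
  have "a = b" if a: "a \<in> I - J" and b: "b \<in> I - J" for a b
  proof (rule ccontr)
    assume ab: "a \<noteq> b"
    obtain Na where Na: "\<And>j. j \<notin> insert a J \<Longrightarrow> Na j = 0" "Na a \<noteq> 0"
      and "lincomb G I f Na \<in> generate G (insert g K)"
      using dependent_insert_relation[OF fI fc JI a Jind maximal[OF a]] by blast
    then obtain ka pa where ka: "ka \<in> K" "lincomb G I f Na = ka \<otimes> g [^] (pa::int)"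
      using generate_insert_subset[OF K g] by blast
    obtain Nb where Nb: "\<And>j. j \<notin> insert b J \<Longrightarrow> Nb j = 0" "Nb b \<noteq> 0"
      and "lincomb G I f Nb \<in> generate G (insert g K)"
      using dependent_insert_relation[OF fI fc JI b Jind maximal[OF b]] by blast
    then obtain kb pb where kb: "kb \<in> K" "lincomb G I f Nb = kb \<otimes> g [^] (pb::int)"
      using generate_insert_subset[OF K g] by blast
    show False
    proof (cases "pb = 0")
      case True
      then have "lincomb G I f Nb \<in> K" using kb Ks by auto
      with ind b Nb(2) show False by auto
    next
      case False
      define m where "m = (\<lambda>j. pb * Na j + (- pa) * Nb j)"
      have "lincomb G I f m = lincomb G I f (\<lambda>j. pb * Na j) \<otimes> lincomb G I f (\<lambda>j. (- pa) * Nb j)"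
        unfolding m_def using fc by (rule lincomb_add)
      also have "\<dots> = (lincomb G I f Na) [^] pb \<otimes> (lincomb G I f Nb) [^] (- pa)"
        using fc by (simp only: lincomb_smult)
      also have "\<dots> = ka [^] pb \<otimes> kb [^] (- pa)"
        using ka kb Ks g by (simp add: pow_mult_pow_cancel subsetD)
      finally have "lincomb G I f m \<in> K"
        using ka kb K by (simp add: subgroup.m_closed subgroup_int_pow_closed)
      with ind a have "m a = 0" by auto
      moreover have "Nb a = 0" using Nb(1) ab a by auto
      ultimately show False using False Na(2) by (simp add: m_def)
    qed
  qed
  then show ?thesis using fI by (simp add: card_le_Suc0_iff_eq)
qed

lemma card_indep_mod_le:
  assumes "finite Xs" "Xs \<subseteq> carrier G" "subgroup K G" "indep_mod G K I f"
    "f ` I \<subseteq> generate G (Xs \<union> K)"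
  shows "card I \<le> card Xs"
  using assms
proof (induct Xs arbitrary: K I f rule: finite_induct)
  case empty
  have "generate G K \<subseteq> K" using empty by (intro generate_subgroup_incl) auto
  then have "I = {}" using empty indep_mod_notin by fastforce
  then show ?case by simp
next
  case (insert g Y)
  have g: "g \<in> carrier G" and Y: "Y \<subseteq> carrier G" using insert by auto
  define K' where "K' = generate G (insert g K)"
  have K': "subgroup K' G"
    unfolding K'_def using g insert(5) subgroup.subset by (intro generate_is_subgroup) blast
  have fI: "finite I" and fc: "f \<in> I \<rightarrow> carrier G" using insert(6) unfolding indep_mod_def by blast+
  obtain J where JI: "J \<subseteq> I" and Jind: "indep_mod G K' J f"
    and maximal: "\<And>i. i \<in> I - J \<Longrightarrow> \<not> indep_mod G K' (insert i J) f"
    using obtain_maximal_indep_mod[OF fI fc] by blast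
  have "f ` J \<subseteq> generate G (Y \<union> K')"
    using insert(7) JI generate_insert_Un[OF Y g insert(5)] unfolding K'_def by auto
  then have "card J \<le> card Y" using insert(3)[OF Y K' Jind] by blast
  moreover have "card (I - J) \<le> 1"
    using card_Diff_maximal_indep_mod_le_1[OF insert(5) g insert(6) JI] Jind maximal
    unfolding K'_def by blast
  moreover have "card I = card J + card (I - J)"
    using fI JI by (metis card_Diff_subset card_mono finite_subset le_add_diff_inverse)
  ultimately show ?case using insert(1,2) by simp
qed

lemma finite_indep_mod_cards:
  assumes "finite Xs" "Xs \<subseteq> carrier G" "subgroup K G" "H \<subseteq> generate G (Xs \<union> K)"
  shows "finite {card S | S. S \<subseteq> H \<and> indep_mod G K S id}"
proof (rule finite_subset)
  show "{card S | S. S \<subseteq> H \<and> indep_mod G K S id} \<subseteq> {..card Xs}"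
    using card_indep_mod_le[OF assms(1-3)] assms(4) by fastforce
qed simp

lemma rank_mod_ge:
  assumes "finite Xs" "Xs \<subseteq> carrier G" "subgroup K G" "H \<subseteq> generate G (Xs \<union> K)"
    and "S \<subseteq> H" "indep_mod G K S id"
  shows "card S \<le> rank_mod G K H"
  unfolding rank_mod_def using finite_indep_mod_cards[OF assms(1-4)] assms(5,6)
  by (intro cSup_upper bdd_above_finite) auto

lemma obtain_rank_mod_basis:
  assumes "finite Xs" "Xs \<subseteq> carrier G" "subgroup K G" "H \<subseteq> generate G (Xs \<union> K)"
  obtains S where "S \<subseteq> H" "indep_mod G K S id" "card S = rank_mod G K H"
proof -
  let ?C = "{card S | S. S \<subseteq> H \<and> indep_mod G K S id}"
  have "{} \<subseteq> H \<and> indep_mod G K {} id" unfolding indep_mod_def by simp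
  then have ne: "?C \<noteq> {}" by blast
  have fin: "finite ?C" using finite_indep_mod_cards[OF assms] .
  have "Max ?C \<in> ?C" using fin ne by (rule Max_in)
  moreover have "rank_mod G K H = Max ?C" unfolding rank_mod_def using fin ne by (rule cSup_eq_Max)
  ultimately show ?thesis using that by auto
qed

lemma rank_mod_le_card:
  assumes "finite Xs" "Xs \<subseteq> carrier G" "subgroup K G" "H \<subseteq> generate G (Xs \<union> K)"
  shows "rank_mod G K H \<le> card Xs"
proof -
  obtain S where "S \<subseteq> H" "indep_mod G K S id" "card S = rank_mod G K H"
    using obtain_rank_mod_basis[OF assms] .
  then show ?thesis using card_indep_mod_le[OF assms(1-3), of S id] assms(4) by auto
qed

lemma rank_mod_mono:
  assumes "finite Xs" "Xs \<subseteq> carrier G" "subgroup K G" "H' \<subseteq> generate G (Xs \<union> K)" "H \<subseteq> H'"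
  shows "rank_mod G K H \<le> rank_mod G K H'"
proof -
  have "H \<subseteq> generate G (Xs \<union> K)" using assms(4,5) by (rule order_trans[rotated])
  then obtain S where "S \<subseteq> H" "indep_mod G K S id" "card S = rank_mod G K H"
    using obtain_rank_mod_basis[OF assms(1-3)] by blast
  then show ?thesis using rank_mod_ge[OF assms(1-4), of S] assms(5) by simp
qed

lemma indep_mod_triangular_relations:
  assumes S: "indep_mod G K0 S id" and JS: "J \<subseteq> S"
    and N: "\<And>s. s \<in> S - J \<Longrightarrow> (\<forall>j. j \<notin> insert s J \<longrightarrow> N s j = 0) \<and> N s s \<noteq> 0"
  shows "indep_mod G K0 (S - J) (\<lambda>s. lincomb G S id (N s))"
  unfolding indep_mod_def
proof (intro conjI allI impI ballI)
  have fS: "finite S" and Sc: "id \<in> S \<rightarrow> carrier G"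
    and indS: "\<And>n. lincomb G S id n \<in> K0 \<Longrightarrow> \<forall>i\<in>S. n i = 0"
    using S unfolding indep_mod_def by blast+
  show "finite (S - J)" using fS by simp
  show "(\<lambda>s. lincomb G S id (N s)) \<in> S - J \<rightarrow> carrier G" using Sc by simp
  fix d t assume h: "lincomb G (S - J) (\<lambda>s. lincomb G S id (N s)) d \<in> K0" and t: "t \<in> S - J"
  have "lincomb G (S - J) (\<lambda>s. lincomb G S id (N s)) d = lincomb G S id (\<lambda>i. \<Sum>s\<in>S - J. d s * N s i)"
    unfolding lincomb_def[of G "S - J"] using Sc fS by (simp add: lincomb_sum)
  with h indS t have "(\<Sum>s\<in>S - J. d s * N s t) = 0" by auto
  moreover have "(\<Sum>s\<in>S - J. d s * N s t) = d t * N t t"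
  proof -
    have "(\<Sum>s\<in>S - J - {t}. d s * N s t) = 0"
      using N t by (intro sum.neutral) auto
    then show ?thesis using t fS by (simp add: sum.remove)
  qed
  ultimately show "d t = 0" using N[OF t] by simp
qed

lemma indep_mod_Un:
  assumes K: "subgroup K G" and K0K: "K0 \<subseteq> K"
    and S1: "S1 \<subseteq> K" "indep_mod G K0 S1 id" and S2: "indep_mod G K S2 id"
  shows "indep_mod G K0 (S1 \<union> S2) id"
  unfolding indep_mod_def
proof (intro conjI allI impI)
  have f1: "finite S1" and f2: "finite S2" and "id \<in> S1 \<rightarrow> carrier G" "id \<in> S2 \<rightarrow> carrier G"
    using S1(2) S2 unfolding indep_mod_def by blast+
  then have c1: "S1 \<subseteq> carrier G" and c2: "S2 \<subseteq> carrier G" by auto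
  have disj: "S1 \<inter> S2 = {}" using indep_mod_notin[OF S2 _ K] S1(1) by auto
  show "finite (S1 \<union> S2)" using f1 f2 by simp
  show "id \<in> S1 \<union> S2 \<rightarrow> carrier G" using c1 c2 by auto
  fix n assume h: "lincomb G (S1 \<union> S2) id n \<in> K0"
  have l1c: "lincomb G S1 id n \<in> carrier G" and l2c: "lincomb G S2 id n \<in> carrier G"
    using c1 c2 by (auto intro!: lincomb_closed)
  have split: "lincomb G (S1 \<union> S2) id n = lincomb G S1 id n \<otimes> lincomb G S2 id n"
    unfolding lincomb_def using f1 f2 disj c1 c2 by (intro finprod_Un_disjoint) (auto simp: Pi_iff)
  have l1: "lincomb G S1 id n \<in> K" using lincomb_in_subgroup[OF K, of id S1] S1(1) by auto
  have "lincomb G S2 id n = inv (lincomb G S1 id n) \<otimes> lincomb G (S1 \<union> S2) id n"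
    using split l1c l2c by (simp add: m_assoc[symmetric])
  then have "lincomb G S2 id n \<in> K"
    using h K0K l1 K by (auto simp: subgroup.m_closed subgroup.m_inv_closed)
  then have z2: "\<forall>i\<in>S2. n i = 0" using S2 unfolding indep_mod_def by blast
  then have "lincomb G S2 id n = \<one>" unfolding lincomb_def by (intro finprod_one_eqI) simp
  then have "lincomb G S1 id n \<in> K0" using split h l1c by simp
  then have "\<forall>i\<in>S1. n i = 0" using S1(2) unfolding indep_mod_def by blast
  then show "\<forall>i\<in>S1 \<union> S2. n i = 0" using z2 by blast
qed

lemma rank_mod_le_add:
  assumes Xs: "finite Xs" "Xs \<subseteq> carrier G" and K0: "subgroup K0 G" and K: "subgroup K G"
    and sub: "K0 \<subseteq> K" "K \<subseteq> H" and Hb: "H \<subseteq> generate G (Xs \<union> K0)"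
  shows "rank_mod G K0 H \<le> rank_mod G K H + rank_mod G K0 K"
proof -
  have Hb': "H \<subseteq> generate G (Xs \<union> K)" using Hb sub(1) mono_generate[of "Xs \<union> K0" "Xs \<union> K"] by blast
  have Kb: "K \<subseteq> generate G (Xs \<union> K0)" using Hb sub by blast
  obtain S where S: "S \<subseteq> H" "indep_mod G K0 S id" "card S = rank_mod G K0 H"
    using obtain_rank_mod_basis[OF Xs K0 Hb] .
  have fS: "finite S" and Sc: "id \<in> S \<rightarrow> carrier G" using S(2) unfolding indep_mod_def by blast+
  obtain J where JS: "J \<subseteq> S" and Jind: "indep_mod G K J id"
    and maximal: "\<And>s. s \<in> S - J \<Longrightarrow> \<not> indep_mod G K (insert s J) id"
    using obtain_maximal_indep_mod[OF fS Sc] by blast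
  have "\<forall>s\<in>S - J. \<exists>N. (\<forall>j. j \<notin> insert s J \<longrightarrow> N j = 0) \<and> N s \<noteq> 0 \<and> lincomb G S id N \<in> K"
    using dependent_insert_relation[OF fS Sc JS _ Jind maximal] by blast
  then obtain N where N: "\<And>s. s \<in> S - J \<Longrightarrow>
      (\<forall>j. j \<notin> insert s J \<longrightarrow> N s j = 0) \<and> N s s \<noteq> 0 \<and> lincomb G S id (N s) \<in> K"
    by metis
  let ?k = "\<lambda>s. lincomb G S id (N s)"
  have kind: "indep_mod G K0 (S - J) ?k"
    using indep_mod_triangular_relations[OF S(2) JS] N by blast
  have "?k ` (S - J) \<subseteq> K" using N by blast
  then have "card (?k ` (S - J)) \<le> rank_mod G K0 K"
    using rank_mod_ge[OF Xs K0 Kb] indep_mod_image[OF kind K0] by blast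
  then have "card (S - J) \<le> rank_mod G K0 K"
    using card_image[OF indep_mod_inj_on[OF kind K0]] by simp
  moreover have "card J \<le> rank_mod G K H" using rank_mod_ge[OF Xs K Hb'] JS S(1) Jind by blast
  moreover have "card S = card J + card (S - J)"
    using fS JS by (metis card_Diff_subset card_mono finite_subset le_add_diff_inverse)
  ultimately show ?thesis using S(3) by linarith
qed

lemma rank_mod_add_le:
  assumes Xs: "finite Xs" "Xs \<subseteq> carrier G" and K0: "subgroup K0 G" and K: "subgroup K G"
    and sub: "K0 \<subseteq> K" "K \<subseteq> H" and Hb: "H \<subseteq> generate G (Xs \<union> K0)"
  shows "rank_mod G K H + rank_mod G K0 K \<le> rank_mod G K0 H"
proof -
  have Hb': "H \<subseteq> generate G (Xs \<union> K)" using Hb sub(1) mono_generate[of "Xs \<union> K0" "Xs \<union> K"] by blast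
  have Kb: "K \<subseteq> generate G (Xs \<union> K0)" using Hb sub by blast
  obtain S1 where S1: "S1 \<subseteq> K" "indep_mod G K0 S1 id" "card S1 = rank_mod G K0 K"
    using obtain_rank_mod_basis[OF Xs K0 Kb] .
  obtain S2 where S2: "S2 \<subseteq> H" "indep_mod G K S2 id" "card S2 = rank_mod G K H"
    using obtain_rank_mod_basis[OF Xs K Hb'] .
  have "S1 \<union> S2 \<subseteq> H" using S1(1) S2(1) sub(2) by blast
  then have "card (S1 \<union> S2) \<le> rank_mod G K0 H"
    using rank_mod_ge[OF Xs K0 Hb] indep_mod_Un[OF K sub(1) S1(1,2) S2(2)] by blast
  moreover have "card (S1 \<union> S2) = card S1 + card S2"
  proof (rule card_Un_disjoint)
    show "finite S1" "finite S2" using S1(2) S2(2) unfolding indep_mod_def by blast+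
    show "S1 \<inter> S2 = {}" using indep_mod_notin[OF S2(2) _ K] S1(1) by auto
  qed
  ultimately show ?thesis using S1 S2 by linarith
qed

lemma rank_mod_add:
  assumes "finite Xs" "Xs \<subseteq> carrier G" "subgroup K0 G" "subgroup K G"
    and "K0 \<subseteq> K" "K \<subseteq> H" "H \<subseteq> generate G (Xs \<union> K0)"
  shows "rank_mod G K0 H = rank_mod G K H + rank_mod G K0 K"
  using rank_mod_le_add[OF assms] rank_mod_add_le[OF assms] by (rule antisym)

end

section \<open>Ranks in quotient groups\<close>

lemma hom_finprod_comm_group:
  assumes G: "comm_group G" and Q: "comm_group Q" and h: "h \<in> hom G Q" and f: "f \<in> I \<rightarrow> carrier G"
  shows "h (finprod G f I) = finprod Q (\<lambda>i. h (f i)) I"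
proof -
  interpret G: comm_group G by fact
  interpret Q: comm_group Q by fact
  have one: "h \<one>\<^bsub>G\<^esub> = \<one>\<^bsub>Q\<^esub>" using hom_one[OF h G.is_group Q.is_group] .
  have hc: "\<And>x. x \<in> carrier G \<Longrightarrow> h x \<in> carrier Q" using h by (auto simp: hom_def)
  show ?thesis
  proof (cases "finite I")
    case True
    then show ?thesis using f
    proof (induct I rule: finite_induct)
      case empty
      then show ?case using one by simp
    next
      case (insert a A)
      then have fA: "f \<in> A \<rightarrow> carrier G" and fa: "f a \<in> carrier G" by auto
      have "finprod G f (insert a A) = f a \<otimes>\<^bsub>G\<^esub> finprod G f A"
        using insert fA fa by (intro G.finprod_insert) auto
      moreover have "finprod Q (\<lambda>i. h (f i)) (insert a A) = h (f a) \<otimes>\<^bsub>Q\<^esub> finprod Q (\<lambda>i. h (f i)) A"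
        using insert fA fa hc by (intro Q.finprod_insert) (auto simp: Pi_iff)
      ultimately show ?case using insert(3) fA fa hom_mult[OF h] by simp
    qed
  next
    case False
    then show ?thesis using one by simp
  qed
qed

lemma hom_lincomb:
  assumes G: "comm_group G" and Q: "comm_group Q" and h: "h \<in> hom G Q" and f: "f \<in> I \<rightarrow> carrier G"
  shows "h (lincomb G I f n) = lincomb Q I (\<lambda>i. h (f i)) n"
proof -
  interpret G: comm_group G by fact
  interpret Q: comm_group Q by fact
  have "h (lincomb G I f n) = finprod Q (\<lambda>i. h (f i [^]\<^bsub>G\<^esub> n i)) I"
    unfolding lincomb_def using f by (intro hom_finprod_comm_group[OF G Q h]) (auto simp: Pi_iff)
  also have "\<dots> = lincomb Q I (\<lambda>i. h (f i)) n"
    unfolding lincomb_def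
  proof (rule Q.finprod_cong')
    show "(\<lambda>i. h (f i) [^]\<^bsub>Q\<^esub> n i) \<in> I \<rightarrow> carrier Q" using f h by (auto simp: hom_def Pi_iff)
    show "h (f i [^]\<^bsub>G\<^esub> n i) = h (f i) [^]\<^bsub>Q\<^esub> n i" if "i \<in> I" for i
      using that f hom_int_pow[OF h _ G.is_group Q.is_group] by auto
  qed simp
  finally show ?thesis .
qed

lemma z_indep_iff_indep_mod: "z_indep G S \<longleftrightarrow> indep_mod G {\<one>\<^bsub>G\<^esub>} S id"
  unfolding z_indep_def indep_mod_def lincomb_def by (auto simp: Pi_iff)

lemma grank_eq_rank_mod: "grank G H = rank_mod G {\<one>\<^bsub>G\<^esub>} H"
  unfolding grank_def rank_mod_def z_indep_iff_indep_mod ..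

context comm_group
begin

lemma indep_mod_iff_FactGroup:
  assumes K: "subgroup K G" and f: "f \<in> I \<rightarrow> carrier G"
  shows "indep_mod G K I f \<longleftrightarrow> indep_mod (G Mod K) {\<one>\<^bsub>G Mod K\<^esub>} I (\<lambda>i. K #> f i)"
proof -
  have Q: "comm_group (G Mod K)" by (rule abelian_FactGroup[OF K])
  have \<pi>: "(\<lambda>a. K #> a) \<in> hom G (G Mod K)"
    using normal.r_coset_hom_Mod[OF subgroup_imp_normal[OF K]] .
  have "(\<lambda>i. K #> f i) \<in> I \<rightarrow> carrier (G Mod K)" using f \<pi> by (auto simp: hom_def)
  moreover have eq: "lincomb (G Mod K) I (\<lambda>i. K #> f i) n \<in> {\<one>\<^bsub>G Mod K\<^esub>} \<longleftrightarrow> lincomb G I f n \<in> K" for n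
  proof -
    have "lincomb (G Mod K) I (\<lambda>i. K #> f i) n = K #> lincomb G I f n"
      using hom_lincomb[OF comm_group_axioms Q \<pi> f] by simp
    moreover have "lincomb G I f n \<in> carrier G" using f by simp
    ultimately show ?thesis using coset_join1[OF _ _ K] coset_join2[OF _ K] by (simp only: one_FactGroup) blast
  qed
  ultimately show ?thesis using f unfolding indep_mod_def by (simp only: eq)
qed

lemma indep_mod_FactGroup_lift:
  assumes K: "subgroup K G" and H: "H \<subseteq> carrier G"
    and T: "T \<subseteq> (\<lambda>a. K #> a) ` H" "indep_mod (G Mod K) {\<one>\<^bsub>G Mod K\<^esub>} T id"
  obtains S where "S \<subseteq> H" "indep_mod G K S id" "card S = card T"
proof -
  interpret Q: comm_group "G Mod K" by (rule abelian_FactGroup[OF K])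
  define L where "L t = (SOME h. h \<in> H \<and> K #> h = t)" for t
  have L: "L t \<in> H \<and> K #> L t = t" if "t \<in> T" for t
  proof -
    have "\<exists>h. h \<in> H \<and> K #> h = t" using that T(1) by blast
    then show ?thesis unfolding L_def by (rule someI_ex)
  qed
  have LT: "L \<in> T \<rightarrow> carrier G" using L H by auto
  have "indep_mod (G Mod K) {\<one>\<^bsub>G Mod K\<^esub>} T (\<lambda>t. K #> L t) = indep_mod (G Mod K) {\<one>\<^bsub>G Mod K\<^esub>} T id"
    by (rule Q.indep_mod_cong) (simp add: L)
  then have ind: "indep_mod G K T L" using T(2) indep_mod_iff_FactGroup[OF K LT] by blast
  show ?thesis
  proof (rule that)
    show "L ` T \<subseteq> H" using L by auto
    show "indep_mod G K (L ` T) id" by (rule indep_mod_image[OF ind K])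
    show "card (L ` T) = card T" by (rule card_image[OF indep_mod_inj_on[OF ind K]])
  qed
qed

lemma indep_mod_FactGroup_image:
  assumes K: "subgroup K G" and S: "S \<subseteq> carrier G" "indep_mod G K S id"
  shows "indep_mod (G Mod K) {\<one>\<^bsub>G Mod K\<^esub>} ((\<lambda>a. K #> a) ` S) id"
    and "card ((\<lambda>a. K #> a) ` S) = card S"
proof -
  interpret Q: comm_group "G Mod K" by (rule abelian_FactGroup[OF K])
  have "id \<in> S \<rightarrow> carrier G" using S(1) by auto
  then have "indep_mod (G Mod K) {\<one>\<^bsub>G Mod K\<^esub>} S (\<lambda>s. K #> id s)"
    using indep_mod_iff_FactGroup[OF K] S(2) by blast
  then have ind: "indep_mod (G Mod K) {\<one>\<^bsub>G Mod K\<^esub>} S (\<lambda>a. K #> a)" by simp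
  show "indep_mod (G Mod K) {\<one>\<^bsub>G Mod K\<^esub>} ((\<lambda>a. K #> a) ` S) id"
    using Q.indep_mod_image[OF ind Q.triv_subgroup] .
  show "card ((\<lambda>a. K #> a) ` S) = card S"
    using card_image[OF Q.indep_mod_inj_on[OF ind Q.triv_subgroup]] .
qed

lemma grank_FactGroup_image:
  assumes K: "subgroup K G" and H: "H \<subseteq> carrier G"
  shows "grank (G Mod K) ((\<lambda>a. K #> a) ` H) = rank_mod G K H"
proof -
  define upstairs where "upstairs S \<longleftrightarrow> S \<subseteq> H \<and> indep_mod G K S id" for S
  define downstairs where "downstairs T \<longleftrightarrow>
    T \<subseteq> (\<lambda>a. K #> a) ` H \<and> indep_mod (G Mod K) {\<one>\<^bsub>G Mod K\<^esub>} T id" for T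
  have lift: "card T \<in> {card S | S. upstairs S}" if "downstairs T" for T
  proof -
    have "T \<subseteq> (\<lambda>a. K #> a) ` H" "indep_mod (G Mod K) {\<one>\<^bsub>G Mod K\<^esub>} T id"
      using that unfolding downstairs_def by simp_all
    then obtain S where "S \<subseteq> H" "indep_mod G K S id" "card S = card T"
      by (rule indep_mod_FactGroup_lift[OF K H])
    then have "card T = card S \<and> upstairs S" unfolding upstairs_def by simp
    then show ?thesis by blast
  qed
  have project: "card S \<in> {card T | T. downstairs T}" if "upstairs S" for S
  proof -
    have SH: "S \<subseteq> H" and ind: "indep_mod G K S id" using that unfolding upstairs_def by simp_all
    have Sc: "S \<subseteq> carrier G" using SH H by (rule order_trans)
    have "(\<lambda>a. K #> a) ` S \<subseteq> (\<lambda>a. K #> a) ` H" using SH by (rule image_mono)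
    then have "card S = card ((\<lambda>a. K #> a) ` S) \<and> downstairs ((\<lambda>a. K #> a) ` S)"
      unfolding downstairs_def using indep_mod_FactGroup_image[OF K Sc ind] by simp
    then show ?thesis by blast
  qed
  have "{card T | T. downstairs T} = {card S | S. upstairs S}"
  proof (intro equalityI subsetI)
    fix c assume "c \<in> {card T | T. downstairs T}"
    then obtain T where "downstairs T" "c = card T" by blast
    then show "c \<in> {card S | S. upstairs S}" using lift by simp
  next
    fix c assume "c \<in> {card S | S. upstairs S}"
    then obtain S where "upstairs S" "c = card S" by blast
    then show "c \<in> {card T | T. downstairs T}" using project by simp
  qed
  then show ?thesis
    unfolding grank_def rank_mod_def z_indep_iff_indep_mod upstairs_def downstairs_def by (simp only:)
qed

end

section \<open>Counting homomorphisms\<close>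

lemma num_hom_bij_betw:
  fixes T :: "('a,'b) monoid_scheme" and T' :: "('c,'d) monoid_scheme" and G :: "('e,'f) monoid_scheme"
    and \<phi> :: "'a \<Rightarrow> 'c"
  assumes bij: "bij_betw \<phi> (carrier T) (carrier T')"
    and hm: "\<And>x y. x \<in> carrier T \<Longrightarrow> y \<in> carrier T \<Longrightarrow> \<phi> (x \<otimes>\<^bsub>T\<^esub> y) = \<phi> x \<otimes>\<^bsub>T'\<^esub> \<phi> y"
    and cl: "\<And>x y. x \<in> carrier T \<Longrightarrow> y \<in> carrier T \<Longrightarrow> x \<otimes>\<^bsub>T\<^esub> y \<in> carrier T"
    and cl': "\<And>x y. x \<in> carrier T' \<Longrightarrow> y \<in> carrier T' \<Longrightarrow> x \<otimes>\<^bsub>T'\<^esub> y \<in> carrier T'"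
  shows "num_hom T G = num_hom T' G"
proof -
  define \<psi> where "\<psi> = inv_into (carrier T) \<phi>"
  have \<psi>1: "\<And>x. x \<in> carrier T \<Longrightarrow> \<psi> (\<phi> x) = x" unfolding \<psi>_def using bij bij_betw_inv_into_left by fast
  have \<psi>2: "\<And>x. x \<in> carrier T' \<Longrightarrow> \<phi> (\<psi> x) = x" unfolding \<psi>_def using bij bij_betw_inv_into_right by fast
  have \<psi>c: "\<And>x. x \<in> carrier T' \<Longrightarrow> \<psi> x \<in> carrier T" unfolding \<psi>_def using bij
    by (metis bij_betw_def inv_into_into)
  have \<phi>c: "\<And>x. x \<in> carrier T \<Longrightarrow> \<phi> x \<in> carrier T'" using bij bij_betw_apply by fast
  have hm': "\<And>x y. x \<in> carrier T' \<Longrightarrow> y \<in> carrier T' \<Longrightarrow> \<psi> (x \<otimes>\<^bsub>T'\<^esub> y) = \<psi> x \<otimes>\<^bsub>T\<^esub> \<psi> y"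
  proof -
    fix x y assume xy: "x \<in> carrier T'" "y \<in> carrier T'"
    have "\<phi> (\<psi> x \<otimes>\<^bsub>T\<^esub> \<psi> y) = x \<otimes>\<^bsub>T'\<^esub> y" using hm[OF \<psi>c \<psi>c] xy \<psi>2 by simp
    then have "\<psi> (x \<otimes>\<^bsub>T'\<^esub> y) = \<psi> (\<phi> (\<psi> x \<otimes>\<^bsub>T\<^esub> \<psi> y))" by simp
    also have "\<dots> = \<psi> x \<otimes>\<^bsub>T\<^esub> \<psi> y" using \<psi>1 cl \<psi>c xy by simp
    finally show "\<psi> (x \<otimes>\<^bsub>T'\<^esub> y) = \<psi> x \<otimes>\<^bsub>T\<^esub> \<psi> y" .
  qed
  define F where "F = (\<lambda>h'::'c \<Rightarrow> 'e. restrict (\<lambda>x. h' (\<phi> x)) (carrier T))"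
  define B where "B = (\<lambda>h::'a \<Rightarrow> 'e. restrict (\<lambda>x. h (\<psi> x)) (carrier T'))"
  have "bij_betw F (hom T' G \<inter> extensional (carrier T')) (hom T G \<inter> extensional (carrier T))"
  proof (rule bij_betw_byWitness[where f' = B])
    show "\<forall>a\<in>hom T' G \<inter> extensional (carrier T'). B (F a) = a"
      unfolding F_def B_def using \<psi>2 \<psi>c by (auto simp: extensional_def fun_eq_iff)
    show "\<forall>a\<in>hom T G \<inter> extensional (carrier T). F (B a) = a"
      unfolding F_def B_def using \<psi>1 \<phi>c by (auto simp: extensional_def fun_eq_iff)
    show "F ` (hom T' G \<inter> extensional (carrier T')) \<subseteq> hom T G \<inter> extensional (carrier T)"
      unfolding F_def using \<phi>c hm cl by (auto simp: hom_def Pi_iff)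
    show "B ` (hom T G \<inter> extensional (carrier T)) \<subseteq> hom T' G \<inter> extensional (carrier T')"
      unfolding B_def using \<psi>c hm' cl' by (auto simp: hom_def Pi_iff)
  qed
  then show ?thesis unfolding num_hom_def by (metis bij_betw_same_card)
qed

lemma num_hom_DirProd:
  fixes T :: "('a,'b) monoid_scheme" and G1 :: "('c,'d) monoid_scheme" and G2 :: "('e,'f) monoid_scheme"
  assumes cl: "\<And>x y. x \<in> carrier T \<Longrightarrow> y \<in> carrier T \<Longrightarrow> x \<otimes>\<^bsub>T\<^esub> y \<in> carrier T"
  shows "num_hom T (G1 \<times>\<times> G2) = num_hom T G1 * num_hom T G2"
proof -
  define F where "F = (\<lambda>h::'a \<Rightarrow> 'c \<times> 'e.
    (restrict (\<lambda>x. fst (h x)) (carrier T), restrict (\<lambda>x. snd (h x)) (carrier T)))"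
  define B where "B = (\<lambda>(h1::'a \<Rightarrow> 'c, h2::'a \<Rightarrow> 'e). restrict (\<lambda>x. (h1 x, h2 x)) (carrier T))"
  have "bij_betw F (hom T (G1 \<times>\<times> G2) \<inter> extensional (carrier T))
     ((hom T G1 \<inter> extensional (carrier T)) \<times> (hom T G2 \<inter> extensional (carrier T)))"
  proof (rule bij_betw_byWitness[where f' = B])
    show "\<forall>a\<in>hom T (G1 \<times>\<times> G2) \<inter> extensional (carrier T). B (F a) = a"
      unfolding F_def B_def by (auto simp: extensional_def fun_eq_iff)
    show "\<forall>a\<in>(hom T G1 \<inter> extensional (carrier T)) \<times> (hom T G2 \<inter> extensional (carrier T)). F (B a) = a"
      unfolding F_def B_def by (auto simp: extensional_def fun_eq_iff)
    show "F ` (hom T (G1 \<times>\<times> G2) \<inter> extensional (carrier T))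
      \<subseteq> (hom T G1 \<inter> extensional (carrier T)) \<times> (hom T G2 \<inter> extensional (carrier T))"
    proof
      fix p assume "p \<in> F ` (hom T (G1 \<times>\<times> G2) \<inter> extensional (carrier T))"
      then obtain h where h: "h \<in> hom T (G1 \<times>\<times> G2)" "p = F h" by auto
      have hc: "\<And>x. x \<in> carrier T \<Longrightarrow> h x \<in> carrier G1 \<times> carrier G2" using h by (auto simp: hom_def)
      have hm: "\<And>x y. x \<in> carrier T \<Longrightarrow> y \<in> carrier T \<Longrightarrow> h (x \<otimes>\<^bsub>T\<^esub> y) = h x \<otimes>\<^bsub>G1 \<times>\<times> G2\<^esub> h y"
        using h by (auto simp: hom_def)
      have "\<And>x y. x \<in> carrier T \<Longrightarrow> y \<in> carrier T \<Longrightarrow>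
          fst (h (x \<otimes>\<^bsub>T\<^esub> y)) = fst (h x) \<otimes>\<^bsub>G1\<^esub> fst (h y) \<and>
          snd (h (x \<otimes>\<^bsub>T\<^esub> y)) = snd (h x) \<otimes>\<^bsub>G2\<^esub> snd (h y)"
        using hm by (metis mult_DirProd prod.collapse fst_conv snd_conv)
      then show "p \<in> (hom T G1 \<inter> extensional (carrier T)) \<times> (hom T G2 \<inter> extensional (carrier T))"
        unfolding h(2) F_def using hc cl by (auto simp: hom_def Pi_iff mem_Times_iff)
    qed
    show "B ` ((hom T G1 \<inter> extensional (carrier T)) \<times> (hom T G2 \<inter> extensional (carrier T)))
      \<subseteq> hom T (G1 \<times>\<times> G2) \<inter> extensional (carrier T)"
      unfolding B_def using cl by (auto simp: hom_def Pi_iff)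
  qed
  then show ?thesis unfolding num_hom_def by (metis bij_betw_same_card card_cartesian_product)
qed

lemma carrier_tors: "carrier (tors Q) = {x \<in> carrier Q. \<exists>n::nat. n > 0 \<and> x [^]\<^bsub>Q\<^esub> n = \<one>\<^bsub>Q\<^esub>}"
  by (simp add: tors_def)

lemma mult_tors: "monoid.mult (tors Q) = monoid.mult Q"
  by (simp add: tors_def)

lemma tors_mult_closed:
  assumes Q: "comm_group Q" and x: "x \<in> carrier (tors Q)" and y: "y \<in> carrier (tors Q)"
  shows "x \<otimes>\<^bsub>tors Q\<^esub> y \<in> carrier (tors Q)"
proof -
  interpret Q: comm_group Q by fact
  have xc: "x \<in> carrier Q" and yc: "y \<in> carrier Q" using x y by (auto simp: carrier_tors)
  obtain n :: nat where n: "n > 0" "x [^]\<^bsub>Q\<^esub> n = \<one>\<^bsub>Q\<^esub>" using x by (auto simp: carrier_tors)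
  obtain m :: nat where m: "m > 0" "y [^]\<^bsub>Q\<^esub> m = \<one>\<^bsub>Q\<^esub>" using y by (auto simp: carrier_tors)
  have "(x \<otimes>\<^bsub>Q\<^esub> y) [^]\<^bsub>Q\<^esub> (n * m) = x [^]\<^bsub>Q\<^esub> (n * m) \<otimes>\<^bsub>Q\<^esub> y [^]\<^bsub>Q\<^esub> (n * m)"
    using xc yc by (simp add: Q.pow_mult_distrib Q.m_comm)
  also have "\<dots> = (x [^]\<^bsub>Q\<^esub> n) [^]\<^bsub>Q\<^esub> m \<otimes>\<^bsub>Q\<^esub> (y [^]\<^bsub>Q\<^esub> m) [^]\<^bsub>Q\<^esub> n"
    using xc yc by (simp add: Q.nat_pow_pow mult.commute)
  also have "\<dots> = \<one>\<^bsub>Q\<^esub>" using n m by simp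
  finally show ?thesis using n m xc yc by (auto simp: carrier_tors mult_tors intro!: exI[of _ "n * m"])
qed

lemma bij_betw_tors_iso:
  assumes A: "group A" and B: "group B" and \<phi>: "\<phi> \<in> iso A B"
  shows "bij_betw \<phi> (carrier (tors A)) (carrier (tors B))"
proof -
  interpret A: group A by fact
  interpret B: group B by fact
  have h: "\<phi> \<in> hom A B" and bij: "bij_betw \<phi> (carrier A) (carrier B)" using \<phi> by (auto simp: iso_def)
  have inj: "inj_on \<phi> (carrier A)" using bij bij_betw_def by blast
  have pw: "\<And>x n. x \<in> carrier A \<Longrightarrow> \<phi> (x [^]\<^bsub>A\<^esub> (n::nat)) = \<phi> x [^]\<^bsub>B\<^esub> n"
    using hom_nat_pow[OF h _ A B] by blast
  have one: "\<phi> \<one>\<^bsub>A\<^esub> = \<one>\<^bsub>B\<^esub>" using hom_one[OF h A B] .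
  have eq: "\<And>x n. x \<in> carrier A \<Longrightarrow> (x [^]\<^bsub>A\<^esub> (n::nat) = \<one>\<^bsub>A\<^esub>) \<longleftrightarrow> (\<phi> x [^]\<^bsub>B\<^esub> n = \<one>\<^bsub>B\<^esub>)"
  proof -
    fix x n assume x: "x \<in> carrier A"
    have "(x [^]\<^bsub>A\<^esub> (n::nat) = \<one>\<^bsub>A\<^esub>) \<longleftrightarrow> \<phi> (x [^]\<^bsub>A\<^esub> n) = \<phi> \<one>\<^bsub>A\<^esub>"
      using inj x by (auto dest: inj_onD)
    then show "(x [^]\<^bsub>A\<^esub> (n::nat) = \<one>\<^bsub>A\<^esub>) \<longleftrightarrow> (\<phi> x [^]\<^bsub>B\<^esub> n = \<one>\<^bsub>B\<^esub>)" using pw[OF x] one by simp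
  qed
  show ?thesis
    unfolding bij_betw_def
  proof
    show "inj_on \<phi> (carrier (tors A))" using inj by (rule inj_on_subset) (auto simp: carrier_tors)
    show "\<phi> ` carrier (tors A) = carrier (tors B)"
    proof (intro equalityI subsetI)
      fix y assume "y \<in> \<phi> ` carrier (tors A)"
      then obtain x where "x \<in> carrier (tors A)" "y = \<phi> x" by auto
      then show "y \<in> carrier (tors B)" using eq bij bij_betw_apply by (fastforce simp: carrier_tors)
    next
      fix y assume y: "y \<in> carrier (tors B)"
      then obtain x where x: "x \<in> carrier A" "y = \<phi> x" using bij by (auto simp: carrier_tors bij_betw_def)
      then show "y \<in> \<phi> ` carrier (tors A)" using y eq by (auto simp: carrier_tors)
    qed
  qed
qed

lemma num_hom_tors_iso:
  assumes A: "comm_group A" and B: "comm_group B" and \<phi>: "\<phi> \<in> iso A B"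
  shows "num_hom (tors A) G = num_hom (tors B) G"
proof (rule num_hom_bij_betw)
  interpret A: comm_group A by fact
  interpret B: comm_group B by fact
  show "bij_betw \<phi> (carrier (tors A)) (carrier (tors B))" by (rule bij_betw_tors_iso[OF A.is_group B.is_group \<phi>])
  show "\<And>x y. x \<in> carrier (tors A) \<Longrightarrow> y \<in> carrier (tors A) \<Longrightarrow> \<phi> (x \<otimes>\<^bsub>tors A\<^esub> y) = \<phi> x \<otimes>\<^bsub>tors B\<^esub> \<phi> y"
    using \<phi> by (auto simp: mult_tors carrier_tors iso_def hom_def)
  show "\<And>x y. x \<in> carrier (tors A) \<Longrightarrow> y \<in> carrier (tors A) \<Longrightarrow> x \<otimes>\<^bsub>tors A\<^esub> y \<in> carrier (tors A)"
    using tors_mult_closed[OF A] by blast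
  show "\<And>x y. x \<in> carrier (tors B) \<Longrightarrow> y \<in> carrier (tors B) \<Longrightarrow> x \<otimes>\<^bsub>tors B\<^esub> y \<in> carrier (tors B)"
    using tors_mult_closed[OF B] by blast
qed

lemma FactGroup_FactGroup_iso:
  assumes G: "comm_group G" and K: "subgroup K G" and H: "subgroup H G" and KH: "K \<subseteq> H"
  shows "\<exists>\<phi>. \<phi> \<in> iso (G Mod H) ((G Mod K) Mod ((\<lambda>h. K #>\<^bsub>G\<^esub> h) ` H))"
proof -
  interpret G: comm_group G by fact
  let ?Q = "G Mod K"
  let ?pi = "\<lambda>a. K #>\<^bsub>G\<^esub> a"
  let ?P = "?pi ` H"
  have Qc: "comm_group ?Q" by (rule G.abelian_FactGroup[OF K])
  interpret Q: comm_group ?Q by (rule Qc)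
  have pih: "?pi \<in> hom G ?Q" using normal.r_coset_hom_Mod[OF G.subgroup_imp_normal[OF K]] .
  interpret pi: group_hom G ?Q ?pi by (intro group_hom.intro group_hom_axioms.intro) (use pih in auto)
  have P: "subgroup ?P ?Q" by (rule pi.subgroup_img_is_subgroup[OF H])
  have Q'c: "comm_group (?Q Mod ?P)" by (rule Q.abelian_FactGroup[OF P])
  interpret Q': comm_group "?Q Mod ?P" by (rule Q'c)
  have rhoh: "(\<lambda>Z. r_coset ?Q ?P Z) \<in> hom ?Q (?Q Mod ?P)"
    using normal.r_coset_hom_Mod[OF Q.subgroup_imp_normal[OF P]] .
  let ?psi = "\<lambda>a. r_coset ?Q ?P (?pi a)"
  have psih: "?psi \<in> hom G (?Q Mod ?P)"
    using pih rhoh unfolding hom_def by (auto simp: Pi_iff)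
  interpret psi: group_hom G "?Q Mod ?P" ?psi by (intro group_hom.intro group_hom_axioms.intro) (use psih in auto)
  have surj: "?psi ` carrier G = carrier (?Q Mod ?P)"
    by (simp add: carrier_FactGroup image_image)
  have Ks: "K \<subseteq> carrier G" and Hs: "H \<subseteq> carrier G" using K H subgroup.subset by blast+
  have ker: "kernel G (?Q Mod ?P) ?psi = H"
  proof (intro equalityI subsetI)
    fix x assume "x \<in> kernel G (?Q Mod ?P) ?psi"
    then have x: "x \<in> carrier G" and e: "r_coset ?Q ?P (?pi x) = ?P" by (auto simp: kernel_def)
    have "?pi x \<in> carrier ?Q" using x pih by (auto simp: hom_def)
    then have "?pi x \<in> ?P" using Q.coset_join1[OF e _ P] by blast
    then obtain h where h: "h \<in> H" "?pi x = ?pi h" by auto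
    have "x \<in> ?pi x" using G.rcos_self[OF x K] .
    then have "x \<in> ?pi h" using h by simp
    then obtain k where k: "k \<in> K" "x = k \<otimes>\<^bsub>G\<^esub> h" unfolding r_coset_def by auto
    then show "x \<in> H" using h KH H by (auto intro: subgroup.m_closed)
  next
    fix x assume x: "x \<in> H"
    then have xc: "x \<in> carrier G" using Hs by auto
    have "?pi x \<in> ?P" using x by auto
    moreover have "?pi x \<in> carrier ?Q" using xc pih by (auto simp: hom_def)
    ultimately have "r_coset ?Q ?P (?pi x) = ?P" using Q.coset_join2[OF _ P] by blast
    then show "x \<in> kernel G (?Q Mod ?P) ?psi" using xc by (simp add: kernel_def)
  qed
  show ?thesis using psi.FactGroup_iso_set[OF surj] unfolding ker by blast
qed

lemma num_hom_tors_FactGroup_FactGroup: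
  assumes G: "comm_group G" and K: "subgroup K G" and H: "subgroup H G" and KH: "K \<subseteq> H"
  shows "num_hom (tors ((G Mod K) Mod ((\<lambda>h. K #>\<^bsub>G\<^esub> h) ` H))) G2 = num_hom (tors (G Mod H)) G2"
proof -
  interpret G: comm_group G by fact
  let ?pi = "\<lambda>a. K #>\<^bsub>G\<^esub> a"
  have Qc: "comm_group (G Mod K)" by (rule G.abelian_FactGroup[OF K])
  interpret Q: comm_group "G Mod K" by (rule Qc)
  have pih: "?pi \<in> hom G (G Mod K)" using normal.r_coset_hom_Mod[OF G.subgroup_imp_normal[OF K]] .
  interpret pi: group_hom G "G Mod K" ?pi by (intro group_hom.intro group_hom_axioms.intro) (use pih in auto)
  have P: "subgroup (?pi ` H) (G Mod K)" by (rule pi.subgroup_img_is_subgroup[OF H])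
  obtain \<phi> where \<phi>: "\<phi> \<in> iso (G Mod H) ((G Mod K) Mod (?pi ` H))" using FactGroup_FactGroup_iso[OF G K H KH] by blast
  show ?thesis
    using num_hom_tors_iso[OF G.abelian_FactGroup[OF H] Q.abelian_FactGroup[OF P] \<phi>, of G2] by simp
qed

section \<open>An alternating sum over chains of subsets\<close>

lemma sum_Pow_interval_alternating:
  assumes "finite B" "A \<subseteq> B"
  shows "(\<Sum>I\<in>Pow B. if A \<subseteq> I then (-1::'r::comm_ring_1) ^ (card B - card I) else 0) = (if A = B then 1 else 0)"
proof (cases "A = B")
  case True
  then have "(\<Sum>I\<in>Pow B. if A \<subseteq> I then (-1::'r) ^ (card B - card I) else 0) = (\<Sum>I\<in>Pow B. if I = B then 1 else 0)"
    by (intro sum.cong) auto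
  then show ?thesis using True assms(1) by simp
next
  case False
  let ?U = "{I. I \<subseteq> B \<and> A \<subseteq> I}"
  have "(\<Sum>I\<in>Pow B. if A \<subseteq> I then (-1::'r) ^ (card B - card I) else 0) = (\<Sum>I\<in>?U. (-1) ^ (card B - card I))"
    using assms(1) by (subst sum.inter_filter[symmetric]) (auto simp: Pow_def)
  also have "\<dots> = (-1) ^ card B * (\<Sum>I\<in>?U. (-1) ^ card I)"
    unfolding sum_distrib_left power_add[symmetric]
    using assms(1) by (intro sum.cong) (auto simp: card_mono neg_one_power_add_eq_neg_one_power_diff)
  also have "(\<Sum>I\<in>?U. (-1::'r) ^ card I) = 0"
  proof (rule sum_alternating_cancels)
    show "finite ?U" using assms(1) by simp
    show "card {I \<in> ?U. even (card I)} = card {I \<in> ?U. odd (card I)}"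
      using card_subsupersets_even_odd[of B A] assms False by (simp add: conj_assoc psubset_eq)
  qed
  finally show ?thesis using False by simp
qed

lemma sum_Pow_Diff_Un:
  assumes "finite N" "I \<subseteq> N"
  shows "(\<Sum>T\<in>Pow (N - I). f (I \<union> T)) = (\<Sum>S\<in>Pow N. if I \<subseteq> S then f S else 0)"
proof -
  have "(\<Sum>S\<in>Pow N. if I \<subseteq> S then f S else 0) = (\<Sum>S\<in>{S \<in> Pow N. I \<subseteq> S}. f S)"
    using assms(1) by (subst sum.inter_filter[symmetric]) auto
  also have "{S \<in> Pow N. I \<subseteq> S} = (\<lambda>T. I \<union> T) ` Pow (N - I)"
  proof (intro equalityI subsetI)
    fix S assume "S \<in> {S \<in> Pow N. I \<subseteq> S}"
    then have "S = I \<union> (S - I)" "S - I \<in> Pow (N - I)" by auto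
    then show "S \<in> (\<lambda>T. I \<union> T) ` Pow (N - I)" by blast
  qed (use assms in auto)
  also have "(\<Sum>S\<in>(\<lambda>T. I \<union> T) ` Pow (N - I). f S) = (\<Sum>T\<in>Pow (N - I). f (I \<union> T))"
    by (rule sum.reindex_cong[where l = "\<lambda>T. I \<union> T"]) (auto simp: inj_on_def)
  finally show ?thesis ..
qed

lemma sum_Pow_intervals_collapse:
  assumes "finite N"
  shows "(\<Sum>I\<in>Pow N. \<Sum>S\<in>Pow N. \<Sum>S'\<in>Pow N.
            if S \<subseteq> I \<and> I \<subseteq> S' then C S S' * (-1::'r::comm_ring_1) ^ (card S' - card I) else 0)
       = (\<Sum>S\<in>Pow N. C S S)"
proof -
  have inner: "(\<Sum>I\<in>Pow N. if S \<subseteq> I \<and> I \<subseteq> S' then C S S' * (-1::'r) ^ (card S' - card I) else 0)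
      = (if S = S' then C S S' else 0)" if S': "S' \<subseteq> N" for S S'
  proof -
    have "(\<Sum>I\<in>Pow N. if S \<subseteq> I \<and> I \<subseteq> S' then C S S' * (-1::'r) ^ (card S' - card I) else 0)
        = C S S' * (\<Sum>I\<in>Pow N. if I \<in> Pow S' then if S \<subseteq> I then (-1) ^ (card S' - card I) else 0 else 0)"
      unfolding sum_distrib_left by (intro sum.cong refl) auto
    also have "\<dots> = C S S' * (\<Sum>I\<in>Pow N \<inter> Pow S'. if S \<subseteq> I then (-1) ^ (card S' - card I) else 0)"
      using assms by (subst sum.inter_restrict) auto
    also have "Pow N \<inter> Pow S' = Pow S'" using S' by auto
    also have "(\<Sum>I\<in>Pow S'. if S \<subseteq> I then (-1::'r) ^ (card S' - card I) else 0) = (if S = S' then 1 else 0)"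
    proof (cases "S \<subseteq> S'")
      case True
      then show ?thesis using finite_subset[OF S' assms] by (rule sum_Pow_interval_alternating[rotated])
    next
      case False
      then have "\<not> S \<subseteq> I" if "I \<in> Pow S'" for I using that by blast
      then have "(\<Sum>I\<in>Pow S'. if S \<subseteq> I then (-1::'r) ^ (card S' - card I) else 0) = 0"
        by (intro sum.neutral) simp
      then show ?thesis using False by auto
    qed
    finally show ?thesis by simp
  qed
  have "(\<Sum>I\<in>Pow N. \<Sum>S\<in>Pow N. \<Sum>S'\<in>Pow N.
            if S \<subseteq> I \<and> I \<subseteq> S' then C S S' * (-1::'r) ^ (card S' - card I) else 0)
      = (\<Sum>S\<in>Pow N. \<Sum>S'\<in>Pow N. \<Sum>I\<in>Pow N.
            if S \<subseteq> I \<and> I \<subseteq> S' then C S S' * (-1::'r) ^ (card S' - card I) else 0)"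
    by (subst sum.swap) (rule sum.cong[OF refl], rule sum.swap)
  also have "\<dots> = (\<Sum>S\<in>Pow N. \<Sum>S'\<in>Pow N. if S = S' then C S S' else 0)"
    using inner by (intro sum.cong refl) simp
  also have "\<dots> = (\<Sum>S\<in>Pow N. C S S)"
    using assms by (intro sum.cong refl) (simp add: sum.delta)
  finally show ?thesis .
qed

lemma neg_one_power_diff_mult:
  fixes a b c d :: nat
  assumes "a \<le> b" "b \<le> d" "d - b \<le> c"
  shows "(-1::'r::comm_ring_1) ^ (b - a) * (-1) ^ (c - (d - b)) = (-1) ^ (d - a) * (-1) ^ c"
proof -
  have "(-1::'r) ^ (c - (d - b)) = (-1) ^ (c + (d - b))"
    using assms(3) by (rule neg_one_power_add_eq_neg_one_power_diff[symmetric])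
  then show ?thesis using assms(1,2) by (simp add: power_add[symmetric] mult_ac)
qed

lemma sum_Pow_rank_product:
  fixes r :: "'a set \<Rightarrow> nat" and a b :: "'a set \<Rightarrow> 'r::comm_ring_1" and x :: 'r
  assumes fN: "finite N" and I: "I \<subseteq> N"
    and mono: "\<And>S S'. S \<subseteq> S' \<Longrightarrow> S' \<subseteq> N \<Longrightarrow> r S \<le> r S'"
    and incr: "\<And>S S'. S \<subseteq> S' \<Longrightarrow> S' \<subseteq> N \<Longrightarrow> r S' - r S \<le> card S' - card S"
  shows "(\<Sum>S\<in>Pow I. a S * (-1) ^ (r I - r S)) *
       (\<Sum>T\<in>Pow (N - I). b (I \<union> T) * (x - 1) ^ ((r N - r I) - (r (I \<union> T) - r I))
                           * (-1) ^ (card T - (r (I \<union> T) - r I)))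
     = (\<Sum>S\<in>Pow N. \<Sum>S'\<in>Pow N. if S \<subseteq> I \<and> I \<subseteq> S'
          then a S * b S' * (x - 1) ^ (r N - r S') * (-1) ^ (r S' - r S) * (-1) ^ (card S' - card I) else 0)"
proof -
  let ?g = "\<lambda>S'. b S' * (x - 1) ^ (r N - r S') * (-1::'r) ^ (card S' - card I - (r S' - r I))"
  have "(\<Sum>T\<in>Pow (N - I). b (I \<union> T) * (x - 1) ^ ((r N - r I) - (r (I \<union> T) - r I))
                           * (-1) ^ (card T - (r (I \<union> T) - r I))) = (\<Sum>T\<in>Pow (N - I). ?g (I \<union> T))"
  proof (rule sum.cong[OF refl])
    fix T assume T: "T \<in> Pow (N - I)"
    then have "card (I \<union> T) = card I + card T"
      using I fN by (subst card_Un_disjoint) (auto intro: finite_subset)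
    moreover have "r I \<le> r (I \<union> T)" "r (I \<union> T) \<le> r N"
      using mono[of I "I \<union> T"] mono[of "I \<union> T" N] I T by auto
    ultimately show "b (I \<union> T) * (x - 1) ^ ((r N - r I) - (r (I \<union> T) - r I))
                           * (-1) ^ (card T - (r (I \<union> T) - r I)) = ?g (I \<union> T)"
      by (simp add: diff_diff_eq)
  qed
  also have "\<dots> = (\<Sum>S'\<in>Pow N. if I \<subseteq> S' then ?g S' else 0)" by (rule sum_Pow_Diff_Un[OF fN I])
  finally have right: "(\<Sum>T\<in>Pow (N - I). b (I \<union> T) * (x - 1) ^ ((r N - r I) - (r (I \<union> T) - r I))
      * (-1) ^ (card T - (r (I \<union> T) - r I))) = (\<Sum>S'\<in>Pow N. if I \<subseteq> S' then ?g S' else 0)" .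
  have left: "(\<Sum>S\<in>Pow I. a S * (-1) ^ (r I - r S))
      = (\<Sum>S\<in>Pow N. if S \<subseteq> I then a S * (-1) ^ (r I - r S) else 0)"
    using I fN by (subst sum.inter_filter[symmetric]) (auto intro: sum.cong)
  have sign: "(if S \<subseteq> I then a S * (-1) ^ (r I - r S) else 0) * (if I \<subseteq> S' then ?g S' else 0)
      = (if S \<subseteq> I \<and> I \<subseteq> S'
         then a S * b S' * (x - 1) ^ (r N - r S') * (-1) ^ (r S' - r S) * (-1) ^ (card S' - card I) else 0)"
    if S': "S' \<subseteq> N" for S S'
  proof (cases "S \<subseteq> I \<and> I \<subseteq> S'")
    case True
    then have "(-1::'r) ^ (r I - r S) * (-1) ^ (card S' - card I - (r S' - r I))
        = (-1) ^ (r S' - r S) * (-1) ^ (card S' - card I)"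
      using mono[of S I] mono[of I S'] incr[of I S'] S' I by (intro neg_one_power_diff_mult) auto
    then show ?thesis using True by (simp add: mult_ac)
  qed auto
  show ?thesis unfolding left right sum_product using sign by (intro sum.cong refl) auto
qed

text \<open>Both sides expand to sums over chains S \<subseteq> I \<subseteq> S', and the alternating sum over the
  intermediate I collapses the chains to S = S'. Monotonicity of r and the bound on its increments
  make all the truncated differences exact.\<close>

lemma sum_Pow_rank_convolution:
  fixes r :: "'a set \<Rightarrow> nat" and a b :: "'a set \<Rightarrow> 'r::comm_ring_1" and x :: 'r
  assumes fN: "finite N"
    and mono: "\<And>S S'. S \<subseteq> S' \<Longrightarrow> S' \<subseteq> N \<Longrightarrow> r S \<le> r S'"
    and incr: "\<And>S S'. S \<subseteq> S' \<Longrightarrow> S' \<subseteq> N \<Longrightarrow> r S' - r S \<le> card S' - card S"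
  shows "(\<Sum>S\<in>Pow N. a S * b S * (x - 1) ^ (r N - r S)) =
    (\<Sum>I\<in>Pow N. (\<Sum>S\<in>Pow I. a S * (-1) ^ (r I - r S)) *
       (\<Sum>T\<in>Pow (N - I). b (I \<union> T) * (x - 1) ^ ((r N - r I) - (r (I \<union> T) - r I))
                           * (-1) ^ (card T - (r (I \<union> T) - r I))))"
proof -
  have "(\<Sum>I\<in>Pow N. (\<Sum>S\<in>Pow I. a S * (-1) ^ (r I - r S)) *
       (\<Sum>T\<in>Pow (N - I). b (I \<union> T) * (x - 1) ^ ((r N - r I) - (r (I \<union> T) - r I))
                           * (-1) ^ (card T - (r (I \<union> T) - r I))))
     = (\<Sum>I\<in>Pow N. \<Sum>S\<in>Pow N. \<Sum>S'\<in>Pow N. if S \<subseteq> I \<and> I \<subseteq> S'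
          then a S * b S' * (x - 1) ^ (r N - r S') * (-1) ^ (r S' - r S) * (-1) ^ (card S' - card I) else 0)"
    by (rule sum.cong[OF refl], rule sum_Pow_rank_product[OF fN _ mono incr]) auto
  also have "\<dots> = (\<Sum>S\<in>Pow N. a S * b S * (x - 1) ^ (r N - r S) * (-1) ^ (r S - r S))"
    by (rule sum_Pow_intervals_collapse[OF fN])
  finally show ?thesis by simp
qed

section \<open>Sublists and contractions\<close>

context comm_group
begin

lemma generate_subset_generate_Un_one: "generate G V \<subseteq> generate G (V \<union> {\<one>})"
  by (rule mono_generate) blast

lemma grank_generate_mono:
  assumes "finite V" "V \<subseteq> carrier G" "U \<subseteq> V"
  shows "grank G (generate G U) \<le> grank G (generate G V)"
  unfolding grank_eq_rank_mod
  using rank_mod_mono[OF assms(1,2) triv_subgroup generate_subset_generate_Un_one] assms(3)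
  by (simp add: mono_generate)

lemma rank_mod_generate_add:
  assumes V: "finite V" "V \<subseteq> carrier G" and XY: "U \<subseteq> V"
  shows "rank_mod G {\<one>} (generate G V)
       = rank_mod G (generate G U) (generate G V) + rank_mod G {\<one>} (generate G U)"
proof (rule rank_mod_add[OF V triv_subgroup])
  show "subgroup (generate G U) G" using V XY by (intro generate_is_subgroup) blast
  show "{\<one>} \<subseteq> generate G U" using generate.one by blast
  show "generate G U \<subseteq> generate G V" using XY by (rule mono_generate)
qed (rule generate_subset_generate_Un_one)

lemma grank_generate_diff_le:
  assumes V: "finite V" "V \<subseteq> carrier G" and XY: "U \<subseteq> V"
  shows "grank G (generate G V) - grank G (generate G U) \<le> card (V - U)"
proof -
  have K: "subgroup (generate G U) G" using V XY by (intro generate_is_subgroup) blast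
  have "V \<subseteq> (V - U) \<union> generate G U" using generate.incl[of _ U G] by blast
  then have "generate G V \<subseteq> generate G ((V - U) \<union> generate G U)" by (rule mono_generate)
  then have "rank_mod G (generate G U) (generate G V) \<le> card (V - U)"
    using V by (intro rank_mod_le_card[OF _ _ K]) auto
  then show ?thesis using rank_mod_generate_add[OF V XY] unfolding grank_eq_rank_mod by simp
qed

lemma generate_FactGroup_image:
  assumes U: "U \<subseteq> carrier G" and V: "V \<subseteq> carrier G"
  shows "generate (G Mod generate G U) ((\<lambda>a. generate G U #> a) ` V)
       = (\<lambda>a. generate G U #> a) ` generate G (U \<union> V)"
proof -
  let ?K = "generate G U"
  let ?\<pi> = "\<lambda>a. ?K #> a"
  have K: "subgroup ?K G" using U by (rule generate_is_subgroup)
  interpret Q: comm_group "G Mod ?K" by (rule abelian_FactGroup[OF K])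
  have \<pi>: "?\<pi> \<in> hom G (G Mod ?K)" using normal.r_coset_hom_Mod[OF subgroup_imp_normal[OF K]] .
  interpret \<pi>: group_hom G "G Mod ?K" ?\<pi>
    by (intro group_hom.intro group_hom_axioms.intro) (use \<pi> in auto)
  have trivial: "?\<pi> a = \<one>\<^bsub>G Mod ?K\<^esub>" if "a \<in> U" for a
  proof -
    have "a \<in> ?K" using that by (rule generate.incl)
    moreover have "a \<in> carrier G" using U that by blast
    ultimately show ?thesis using coset_join2[OF _ K] by simp
  qed
  have "generate (G Mod ?K) (?\<pi> ` V) = generate (G Mod ?K) (?\<pi> ` (U \<union> V))"
  proof
    show "generate (G Mod ?K) (?\<pi> ` V) \<subseteq> generate (G Mod ?K) (?\<pi> ` (U \<union> V))"
      by (rule Q.mono_generate) blast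
    have "?\<pi> ` V \<subseteq> carrier (G Mod ?K)" using V \<pi> by (auto simp: hom_def)
    then have "subgroup (generate (G Mod ?K) (?\<pi> ` V)) (G Mod ?K)" by (rule Q.generate_is_subgroup)
    moreover have "?\<pi> ` (U \<union> V) \<subseteq> generate (G Mod ?K) (?\<pi> ` V)"
      using trivial generate.one[of "G Mod ?K"] generate.incl[of _ "?\<pi> ` V" "G Mod ?K"] by auto
    ultimately show "generate (G Mod ?K) (?\<pi> ` (U \<union> V)) \<subseteq> generate (G Mod ?K) (?\<pi> ` V)"
      by (intro Q.generate_subgroup_incl)
  qed
  also have "\<dots> = ?\<pi> ` generate G (U \<union> V)" using U V by (intro \<pi>.generate_img) auto
  finally show ?thesis .
qed

lemma grank_FactGroup_generate:
  assumes U: "finite U" "U \<subseteq> carrier G" and V: "finite V" "V \<subseteq> carrier G"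
  shows "grank (G Mod generate G U) (generate (G Mod generate G U) ((\<lambda>a. generate G U #> a) ` V))
       = grank G (generate G (U \<union> V)) - grank G (generate G U)"
proof -
  have K: "subgroup (generate G U) G" using U by (intro generate_is_subgroup)
  have "generate G (U \<union> V) \<subseteq> carrier G" using U V by (intro generate_incl) auto
  then have "grank (G Mod generate G U) ((\<lambda>a. generate G U #> a) ` generate G (U \<union> V))
      = rank_mod G (generate G U) (generate G (U \<union> V))"
    by (rule grank_FactGroup_image[OF K])
  then show ?thesis
    using rank_mod_generate_add[of "U \<union> V" U] U V
    unfolding generate_FactGroup_image[OF U(2) V(2)] grank_eq_rank_mod by simp
qed

lemma mult_m_FactGroup:
  assumes U: "U \<subseteq> carrier G" and V: "V \<subseteq> carrier G"
  shows "mult_m (G Mod generate G U) ((\<lambda>a. generate G U #> a) ` V) G2 = mult_m G (U \<union> V) G2"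
proof -
  have K: "subgroup (generate G U) G" using U by (rule generate_is_subgroup)
  have H: "subgroup (generate G (U \<union> V)) G" using U V by (intro generate_is_subgroup) blast
  have "generate G U \<subseteq> generate G (U \<union> V)" by (intro mono_generate) blast
  then show ?thesis
    unfolding mult_m_def generate_FactGroup_image[OF U V]
    using num_hom_tors_FactGroup_FactGroup[OF comm_group_axioms K H] by simp
qed

end

abbreviation sub_rank :: "('a, 'b) monoid_scheme \<Rightarrow> 'a list \<Rightarrow> nat set \<Rightarrow> nat" where
  "sub_rank \<Gamma> A S \<equiv> grank \<Gamma> (generate \<Gamma> (sub_elems A S))"

lemma sub_elems_subset: "S \<subseteq> {..<length A} \<Longrightarrow> sub_elems A S \<subseteq> set A"
  unfolding sub_elems_def by auto

lemma sub_elems_lessThan_length: "sub_elems A {..<length A} = set A"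
  unfolding sub_elems_def by (auto simp: set_conv_nth)

lemma sub_elems_Un: "sub_elems A (S \<union> T) = sub_elems A S \<union> sub_elems A T"
  unfolding sub_elems_def by auto

lemma card_sub_elems_Diff_le:
  assumes "S \<subseteq> S'" "finite S'"
  shows "card (sub_elems A S' - sub_elems A S) \<le> card S' - card S"
proof -
  have "card (sub_elems A S' - sub_elems A S) \<le> card (sub_elems A (S' - S))"
    using assms unfolding sub_elems_def by (intro card_mono) auto
  also have "\<dots> \<le> card (S' - S)" unfolding sub_elems_def using assms by (intro card_image_le) simp
  also have "\<dots> = card S' - card S" using assms by (simp add: card_Diff_subset finite_subset)
  finally show ?thesis .
qed

context comm_group
begin

lemma sub_rank_mono:
  assumes "set A \<subseteq> carrier G" "S \<subseteq> S'" "S' \<subseteq> {..<length A}"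
  shows "sub_rank G A S \<le> sub_rank G A S'"
  using assms sub_elems_subset[of S' A] finite_subset[of S' "{..<length A}"]
  by (intro grank_generate_mono) (auto simp: sub_elems_def)

lemma sub_rank_diff_le:
  assumes "set A \<subseteq> carrier G" "S \<subseteq> S'" "S' \<subseteq> {..<length A}"
  shows "sub_rank G A S' - sub_rank G A S \<le> card S' - card S"
proof -
  have "finite S'" using assms(3) finite_subset by blast
  then have "sub_rank G A S' - sub_rank G A S \<le> card (sub_elems A S' - sub_elems A S)"
    using assms sub_elems_subset[of S' A] by (intro grank_generate_diff_le) (auto simp: sub_elems_def)
  also have "\<dots> \<le> card S' - card S" using assms(2) \<open>finite S'\<close> by (rule card_sub_elems_Diff_le)
  finally show ?thesis .
qed

end

lemma tutteG_map_distinct: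
  assumes "distinct e"
  shows "tutteG \<Lambda> (map f e) G x y =
    (\<Sum>S\<in>Pow (set e). of_nat (mult_m \<Lambda> (f ` S) G)
       * (x - 1) ^ (grank \<Lambda> (generate \<Lambda> (f ` set e)) - grank \<Lambda> (generate \<Lambda> (f ` S)))
       * (y - 1) ^ (card S - grank \<Lambda> (generate \<Lambda> (f ` S))))"
proof -
  have inj: "inj_on ((!) e) {..<length e}" using assms by (simp add: inj_on_def nth_eq_iff_index_eq)
  have "Pow (set e) = image ((!) e) ` Pow {..<length e}"
    by (rule image_Pow_surj[symmetric]) (auto simp: set_conv_nth)
  moreover have "sub_elems (map f e) J = f ` ((!) e ` J)" "card ((!) e ` J) = card J"
    if "J \<subseteq> {..<length e}" for J
  proof -
    show "sub_elems (map f e) J = f ` ((!) e ` J)"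
      unfolding sub_elems_def image_image using that by (intro image_cong) auto
    show "card ((!) e ` J) = card J" using inj_on_subset[OF inj that] by (rule card_image)
  qed
  ultimately show ?thesis
    unfolding tutteG_def length_map set_map
    by (simp add: sum.reindex[OF inj_on_image_Pow[OF inj]])
qed

lemma tutteG_sublist_idx_at_0:
  fixes y :: "'r::comm_ring_1"
  assumes I: "I \<subseteq> {..<length A}"
  shows "tutteG \<Gamma> (sublist_idx A I) G 0 y =
    (\<Sum>S\<in>Pow I. of_nat (mult_m \<Gamma> (sub_elems A S) G) * (y - 1) ^ (card S - sub_rank \<Gamma> A S)
                * (-1) ^ (sub_rank \<Gamma> A I - sub_rank \<Gamma> A S))"
proof -
  have "set (filter (\<lambda>i. i \<in> I) [0..<length A]) = I" using I by auto
  then show ?thesis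
    unfolding sublist_idx_def tutteG_map_distinct[OF distinct_filter[OF distinct_upt]]
    by (simp add: sub_elems_def mult_ac)
qed

lemma tutteG_contr_at_0:
  fixes x :: "'r::comm_ring_1"
  assumes G: "comm_group \<Gamma>" and A: "set A \<subseteq> carrier \<Gamma>" and I: "I \<subseteq> {..<length A}"
  shows "tutteG (\<Gamma> Mod (generate \<Gamma> (sub_elems A I))) (contr \<Gamma> A I) G x 0 =
    (\<Sum>T\<in>Pow ({..<length A} - I). of_nat (mult_m \<Gamma> (sub_elems A (I \<union> T)) G)
       * (x - 1) ^ ((sub_rank \<Gamma> A {..<length A} - sub_rank \<Gamma> A I) - (sub_rank \<Gamma> A (I \<union> T) - sub_rank \<Gamma> A I))
       * (-1) ^ (card T - (sub_rank \<Gamma> A (I \<union> T) - sub_rank \<Gamma> A I)))"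
proof -
  interpret comm_group \<Gamma> by fact
  let ?\<pi> = "\<lambda>a. generate \<Gamma> (sub_elems A I) #>\<^bsub>\<Gamma>\<^esub> a" and ?Q = "\<Gamma> Mod generate \<Gamma> (sub_elems A I)"
  have set_e: "set (filter (\<lambda>i. i \<notin> I) [0..<length A]) = {..<length A} - I" by auto
  have image: "(\<lambda>i. ?\<pi> (A ! i)) ` T = ?\<pi> ` sub_elems A T" for T
    unfolding sub_elems_def by (simp add: image_image)
  have elems: "finite (sub_elems A T)" "sub_elems A T \<subseteq> carrier \<Gamma>" if "T \<subseteq> {..<length A}" for T
    using sub_elems_subset[OF that] A finite_subset[OF that] unfolding sub_elems_def by auto
  have quot: "grank ?Q (generate ?Q (?\<pi> ` sub_elems A T)) = sub_rank \<Gamma> A (I \<union> T) - sub_rank \<Gamma> A I"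
      "mult_m ?Q (?\<pi> ` sub_elems A T) G = mult_m \<Gamma> (sub_elems A (I \<union> T)) G"
    if "T \<subseteq> {..<length A} - I" for T
  proof -
    have T: "T \<subseteq> {..<length A}" using that by blast
    show "grank ?Q (generate ?Q (?\<pi> ` sub_elems A T)) = sub_rank \<Gamma> A (I \<union> T) - sub_rank \<Gamma> A I"
      using grank_FactGroup_generate[OF elems[OF I] elems[OF T]] by (simp add: sub_elems_Un)
    show "mult_m ?Q (?\<pi> ` sub_elems A T) G = mult_m \<Gamma> (sub_elems A (I \<union> T)) G"
      using mult_m_FactGroup[OF elems(2)[OF I] elems(2)[OF T]] by (simp add: sub_elems_Un)
  qed
  have "I \<union> ({..<length A} - I) = {..<length A}" using I by blast
  then have full: "grank ?Q (generate ?Q (?\<pi> ` sub_elems A ({..<length A} - I)))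
      = sub_rank \<Gamma> A {..<length A} - sub_rank \<Gamma> A I"
    using quot(1)[of "{..<length A} - I"] by simp
  show ?thesis
    unfolding contr_def tutteG_map_distinct[OF distinct_filter[OF distinct_upt]] set_e image full
    by (intro sum.cong refl) (simp add: quot)
qed

lemma tutteG_DirProd:
  assumes "comm_group \<Gamma>" "set A \<subseteq> carrier \<Gamma>"
  shows "tutteG \<Gamma> A (G1 \<times>\<times> G2) x y =
    (\<Sum>S\<in>Pow {..<length A}. of_nat (mult_m \<Gamma> (sub_elems A S) G1) * (y - 1) ^ (card S - sub_rank \<Gamma> A S)
        * of_nat (mult_m \<Gamma> (sub_elems A S) G2) * (x - 1) ^ (sub_rank \<Gamma> A {..<length A} - sub_rank \<Gamma> A S))"
  unfolding tutteG_def sub_elems_lessThan_length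
proof (rule sum.cong[OF refl])
  interpret comm_group \<Gamma> by fact
  fix S assume S: "S \<in> Pow {..<length A}"
  have "subgroup (generate \<Gamma> (sub_elems A S)) \<Gamma>"
    using assms(2) sub_elems_subset[of S A] S by (intro generate_is_subgroup) auto
  then have "mult_m \<Gamma> (sub_elems A S) (G1 \<times>\<times> G2) = mult_m \<Gamma> (sub_elems A S) G1 * mult_m \<Gamma> (sub_elems A S) G2"
    unfolding mult_m_def by (intro num_hom_DirProd tors_mult_closed abelian_FactGroup)
  then show "of_nat (mult_m \<Gamma> (sub_elems A S) (G1 \<times>\<times> G2))
        * (x - 1) ^ (grank \<Gamma> (generate \<Gamma> (set A)) - sub_rank \<Gamma> A S) * (y - 1) ^ (card S - sub_rank \<Gamma> A S)
      = of_nat (mult_m \<Gamma> (sub_elems A S) G1) * (y - 1) ^ (card S - sub_rank \<Gamma> A S)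
        * of_nat (mult_m \<Gamma> (sub_elems A S) G2) * (x - 1) ^ (grank \<Gamma> (generate \<Gamma> (set A)) - sub_rank \<Gamma> A S)"
    by (simp add: mult_ac)
qed

theorem mainTheorem19:
  fixes \<Gamma> :: "('a, 'b) monoid_scheme" and A :: "'a list"
    and G1 :: "('c, 'd) monoid_scheme" and G2 :: "('e, 'f) monoid_scheme"
    and x y :: "'r::comm_ring_1"
  assumes "comm_group \<Gamma>" and "fin_gen \<Gamma>" and "set A \<subseteq> carrier \<Gamma>"
    and "comm_group G1" and "torsion_wise_finite G1"
    and "comm_group G2" and "torsion_wise_finite G2"
  shows "tutteG \<Gamma> A (G1 \<times>\<times> G2) x y =
    (\<Sum>I\<in>Pow {..<length A}.
       tutteG \<Gamma> (sublist_idx A I) G1 0 y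
       * tutteG (\<Gamma> Mod (generate \<Gamma> (sub_elems A I))) (contr \<Gamma> A I) G2 x 0)"
proof -
  (* Neither fin_gen nor torsion-wise finiteness is needed: all ranks are bounded by length A, and
     num_hom is a cardinality (junk value 0 for an infinite Hom-set), for which the product
     formula num_hom_DirProd holds unconditionally. *)
  interpret comm_group \<Gamma> by fact
  let ?r = "sub_rank \<Gamma> A" and ?N = "{..<length A}"
  let ?a = "\<lambda>S. of_nat (mult_m \<Gamma> (sub_elems A S) G1) * (y - 1) ^ (card S - ?r S)"
  let ?b = "\<lambda>S. of_nat (mult_m \<Gamma> (sub_elems A S) G2) :: 'r"
  have "tutteG \<Gamma> A (G1 \<times>\<times> G2) x y = (\<Sum>S\<in>Pow ?N. ?a S * ?b S * (x - 1) ^ (?r ?N - ?r S))"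
    using tutteG_DirProd[OF assms(1,3)] .
  also have "\<dots> = (\<Sum>I\<in>Pow ?N. (\<Sum>S\<in>Pow I. ?a S * (-1) ^ (?r I - ?r S)) *
       (\<Sum>T\<in>Pow (?N - I). ?b (I \<union> T) * (x - 1) ^ ((?r ?N - ?r I) - (?r (I \<union> T) - ?r I))
                           * (-1) ^ (card T - (?r (I \<union> T) - ?r I))))"
    using sub_rank_mono[OF assms(3)] sub_rank_diff_le[OF assms(3)]
    by (intro sum_Pow_rank_convolution) auto
  also have "\<dots> = (\<Sum>I\<in>Pow ?N. tutteG \<Gamma> (sublist_idx A I) G1 0 y
                      * tutteG (\<Gamma> Mod (generate \<Gamma> (sub_elems A I))) (contr \<Gamma> A I) G2 x 0)"
    by (intro sum.cong refl)
      (simp only: Pow_iff tutteG_sublist_idx_at_0 tutteG_contr_at_0[OF assms(1,3)])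
  finally show ?thesis .
qed

end
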